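(* Let $n\ge1$, let $\mathcal{T}^\bullet_n$ be the set of all triangulations of the once-punctured polygon $P_n^\bullet$, let $G_n=\langle\sigma\rangle$ be the cyclic group of order $n$ acting by rotation, and let $$t_n(q)=\sum_{s=1}^n\begin{bmatrix} 2n-s-1\\ n-1\end{bmatrix}_q .$$ Then $(\mathcal{T}^\bullet_n,G_n,t_n(q))$ exhibits the cyclic sieving phenomenon.
   Context: $P_n^\bullet$ is a disc with $n$ marked points $v_0,\ldots,v_{n-1}$ on its boundary in clockwise order and one interior marked point $\bullet$. Arcs are non-self-intersecting curves with endpoints at marked points, up to isotopy, not isotopic to a boundary segment or contractible. A triangulation of $P_n^\bullet$ is a maximal set of pairwise non-crossing arcs (equivalently a set of pairwise non-crossing arcs cutting $P_n^\bullet$ into triangles, self-folded triangles allowed). The rotation $\sigma$ maps $v_i\mapsto v_{i-1}$. $q$-binomials: $\begin{bmatrix} a\\ b\end{bmatrix}_q=\frac{[a]_q!}{[b]_q![a-b]_q!}$ with $[a]_q=1+\cdots+q^{a-1}$. A triple $(X,G,X(q))$ with $G=\langle\sigma\rangle$ cyclic of order $N$ acting on a finite set $X$ and $X(q)\in\mathbb{Z}[q]$ exhibits the cyclic sieving phenomenon if $X(\zeta_N^j)$ equals the number of fixed points of $\sigma^j$ for every integer $j$, with $\zeta_N$ a primitive $N$-th root of unity. *)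

theory Defs
  imports Complex_Main "HOL-Computational_Algebra.Polynomial"
begin

text \<open>Boundary marked points v_0..v_(n-1) in clockwise order, puncture in the interior.
  Every arc (up to isotopy) is one of:
  Rad i      : the arc from v_i to the puncture;
  Bd i k     : (2 <= k <= n) the arc from v_i to v_((i+k) mod n) such that the region
               between the arc and the boundary path v_i, v_(i+1), ..., v_(i+k)
               (clockwise, k boundary segments) does not contain the puncture.
               For k = n this is the loop at v_i enclosing the puncture; k = 1 would be
               a boundary segment and is excluded.\<close>

datatype parc = Rad nat | Bd nat nat

definition arcs :: "nat \<Rightarrow> parc set" where
  "arcs n = {Rad i | i. i < n} \<union> {Bd i k | i k. i < n \<and> 2 \<le> k \<and> k \<le> n}"

text \<open>A boundary arc Bd i k lifts to the
  integer interval [i, i+k] on the universal cover of the boundary circle (circumference n);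
  two boundary arcs are non-crossing iff some lifts are nested or have disjoint interiors
  on the circle.  A radial arc Rad j is non-crossing with Bd i k iff v_j is not strictly
  inside the puncture-free region cut off by Bd i k.\<close>

fun compatible :: "nat \<Rightarrow> parc \<Rightarrow> parc \<Rightarrow> bool" where
  "compatible n (Rad i) (Rad j) = True"
| "compatible n (Rad j) (Bd i k) = (\<not> (\<exists>t. 0 < t \<and> t < k \<and> (i + t) mod n = j))"
| "compatible n (Bd i k) (Rad j) = (\<not> (\<exists>t. 0 < t \<and> t < k \<and> (i + t) mod n = j))"
| "compatible n (Bd i k) (Bd j l) =
     (\<exists>m::int. let a = int i; b = int i + int k;
                  c = int j + m * int n; d = int j + int l + m * int n
              in (a \<le> c \<and> d \<le> b) \<or> (c \<le> a \<and> b \<le> d) \<or> (b \<le> c \<and> d \<le> a + int n))"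

definition triangulations :: "nat \<Rightarrow> parc set set" where
  "triangulations n = {T. T \<subseteq> arcs n \<and> (\<forall>\<alpha>\<in>T. \<forall>\<beta>\<in>T. compatible n \<alpha> \<beta>) \<and>
      (\<forall>\<alpha>\<in>arcs n. (\<forall>\<beta>\<in>T. compatible n \<alpha> \<beta>) \<longrightarrow> \<alpha> \<in> T)}"

fun rot_arc :: "nat \<Rightarrow> parc \<Rightarrow> parc" where
  "rot_arc n (Rad i) = Rad ((i + n - 1) mod n)"
| "rot_arc n (Bd i k) = Bd ((i + n - 1) mod n) k"

definition rot_tri :: "nat \<Rightarrow> parc set \<Rightarrow> parc set" where
  "rot_tri n T = rot_arc n ` T"

definition qint :: "nat \<Rightarrow> int poly" where
  "qint a = (\<Sum>i<a. monom 1 i)"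

definition qfact :: "nat \<Rightarrow> int poly" where
  "qfact a = (\<Prod>i\<in>{1..a}. qint i)"

definition qbinom :: "nat \<Rightarrow> nat \<Rightarrow> int poly" where
  "qbinom a b = qfact a div (qfact b * qfact (a - b))"

definition t_poly :: "nat \<Rightarrow> int poly" where
  "t_poly n = (\<Sum>s=1..n. qbinom (2 * n - s - 1) (n - 1))"

definition primitive_root :: "nat \<Rightarrow> complex \<Rightarrow> bool" where
  "primitive_root N z \<longleftrightarrow> z ^ N = 1 \<and> (\<forall>k. 0 < k \<and> k < N \<longrightarrow> z ^ k \<noteq> 1)"

definition cyclic_sieving :: "'a set \<Rightarrow> ('a \<Rightarrow> 'a) \<Rightarrow> nat \<Rightarrow> int poly \<Rightarrow> bool" where
  "cyclic_sieving X g N P \<longleftrightarrow>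
     finite X \<and> bij_betw g X X \<and> (\<forall>x\<in>X. (g ^^ N) x = x) \<and>
     (\<forall>z. primitive_root N z \<longrightarrow>
        (\<forall>j::nat. poly (map_poly of_int P) (z ^ j) = of_nat (card {x\<in>X. (g ^^ j) x = x})))"

end

theory Submission
  imports Defs
begin

text \<open>Counting, for each boundary vertex \<open>v\<^sub>i\<close>, the arcs of a triangulation that start
  at \<open>v\<^sub>i\<close> (the radial arc at \<open>v\<^sub>i\<close> and the boundary arcs running clockwise from it)
  gives a bijection between the triangulations of the once-punctured \<open>n\<close>-gon and the weak
  compositions \<open>a\<close> of \<open>n\<close> into \<open>n\<close> parts, under which the rotation becomes a cyclic shift
  of \<open>a\<close>.  The inverse reads the arcs off the height function \<open>h\<close> whose steps are
  \<open>a\<^sub>i - 1\<close>: there is a radial arc at \<open>v\<^sub>i\<close> iff \<open>h\<close> stays at or above \<open>h(i)\<close> for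
  a full period, and a boundary arc from \<open>v\<^sub>i\<close> to \<open>v(i + m)\<close> iff \<open>h(i + m)\<close> is a new
  strict minimum after \<open>i\<close> and at least \<open>h(i) - 1\<close>.  Both directions are proved on the
  universal cover \<open>\<int>\<close> of the boundary, where a triangulation becomes a maximal laminar family
  of intervals and the increments of \<open>h\<close> count intervals and points in windows.

  The compositions fixed by the \<open>j\<close>-th shift are those of period \<open>d = gcd j n\<close>; there are
  \<open>C(2d - 1, d)\<close> of them.  For a primitive \<open>n\<close>-th root of unity \<open>z\<close>, \<open>z\<^sup>j\<close> is a
  primitive \<open>(n / d)\<close>-th root, and the \<open>q\<close>-Lucas theorem collapses \<open>t\<^sub>n(z\<^sup>j)\<close> to
  \<open>\<Sum>i<d. C(d - 1 + i, d - 1) = C(2d - 1, d)\<close>.\<close>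

section \<open>Gaussian polynomials at roots of unity\<close>

lemma sum_lessThan_mult_blocks:
  "(\<Sum>k<q * e. f k) = (\<Sum>i<q. \<Sum>r<e. f (i * e + r))" for q e :: nat
proof -
  have "(\<Sum>k\<in>{i * e..<i * e + e}. f k) = (\<Sum>r<e. f (i * e + r))" for i
    using sum.shift_bounds_nat_ivl[of f 0 "i * e" e] by (simp add: atLeast0LessThan add.commute)
  then show ?thesis by (simp add: sum.nat_group[symmetric])
qed

lemma map_poly_of_int_add:
  "map_poly (of_int :: int \<Rightarrow> 'a::comm_ring_1) (p + q) = map_poly of_int p + map_poly of_int q"
  by (rule poly_eqI) (simp add: coeff_map_poly)

lemma map_poly_of_int_mult:
  "map_poly (of_int :: int \<Rightarrow> 'a::comm_ring_1) (p * q) = map_poly of_int p * map_poly of_int q"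
  by (rule poly_eqI) (simp add: coeff_map_poly coeff_mult)

definition ipoly :: "int poly \<Rightarrow> complex \<Rightarrow> complex" where
  "ipoly p z = poly (map_poly of_int p) z"

lemma ipoly_add [simp]: "ipoly (p + q) z = ipoly p z + ipoly q z"
  by (simp add: ipoly_def map_poly_of_int_add)

lemma ipoly_mult [simp]: "ipoly (p * q) z = ipoly p z * ipoly q z"
  by (simp add: ipoly_def map_poly_of_int_mult)

lemma ipoly_0 [simp]: "ipoly 0 z = 0"
  and ipoly_1 [simp]: "ipoly 1 z = 1"
  and ipoly_monom [simp]: "ipoly (monom 1 i) z = z ^ i"
  by (simp_all add: ipoly_def poly_monom map_poly_monom)

lemma ipoly_sum: "ipoly (sum f A) z = (\<Sum>x\<in>A. ipoly (f x) z)"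
  by (induction A rule: infinite_finite_induct) auto

lemma ipoly_prod: "ipoly (prod f A) z = (\<Prod>x\<in>A. ipoly (f x) z)"
  by (induction A rule: infinite_finite_induct) auto

fun gauss :: "nat \<Rightarrow> nat \<Rightarrow> int poly" where
  "gauss a 0 = 1"
| "gauss 0 (Suc b) = 0"
| "gauss (Suc a) (Suc b) = gauss a b + monom 1 (Suc b) * gauss a (Suc b)"

lemma gauss_eq_0: "a < b \<Longrightarrow> gauss a b = 0"
proof (induction a arbitrary: b)
  case 0 then show ?case by (cases b) auto
next
  case (Suc a) then show ?case by (cases b) auto
qed

lemma gauss_diag [simp]: "gauss a a = 1"
  by (induction a) (auto simp: gauss_eq_0)

lemma gauss_0_left: "gauss 0 b = (if b = 0 then 1 else 0)"
  by (cases b) auto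

lemma qint_0 [simp]: "qint 0 = 0"
  by (simp add: qint_def)

lemma qint_Suc: "qint (Suc k) = qint k + monom 1 k"
  by (simp add: qint_def)

lemma qint_Suc_split: "b \<le> a \<Longrightarrow> qint (Suc a) = qint (Suc b) + monom 1 (Suc b) * qint (a - b)"
proof (induction a rule: dec_induct)
  case (step a)
  then have "Suc a - b = Suc (a - b)" by simp
  then show ?case using step
    by (simp add: qint_Suc[of "Suc a"] qint_Suc[of "a - b"] mult_monom algebra_simps)
qed simp

lemma qfact_0 [simp]: "qfact 0 = 1"
  by (simp add: qfact_def)

lemma qfact_Suc: "qfact (Suc a) = qfact a * qint (Suc a)"
  by (simp add: qfact_def prod.nat_ivl_Suc' mult.commute)

lemma qfact_eq_gauss_mult: "b \<le> a \<Longrightarrow> qfact a = gauss a b * qfact b * qfact (a - b)"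
proof (induction a arbitrary: b)
  case (Suc a)
  show ?case
  proof (cases b)
    case (Suc c)
    with Suc.prems have c: "c \<le> a" by simp
    have left: "gauss a c * qfact (Suc c) * qfact (a - c) = qfact a * qint (Suc c)"
      using Suc.IH[OF c] by (simp add: qfact_Suc algebra_simps)
    have right: "monom 1 (Suc c) * gauss a (Suc c) * qfact (Suc c) * qfact (a - c)
        = qfact a * (monom 1 (Suc c) * qint (a - c))"
    proof (cases "Suc c \<le> a")
      case True
      then have "a - c = Suc (a - Suc c)" by simp
      then show ?thesis using Suc.IH[OF True] by (simp add: qfact_Suc algebra_simps)
    qed (simp add: gauss_eq_0)
    have "gauss (Suc a) b * qfact b * qfact (Suc a - b)
        = gauss a c * qfact (Suc c) * qfact (a - c)
          + monom 1 (Suc c) * gauss a (Suc c) * qfact (Suc c) * qfact (a - c)"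
      using Suc by (simp add: algebra_simps)
    also have "\<dots> = qfact a * (qint (Suc c) + monom 1 (Suc c) * qint (a - c))"
      unfolding left right by (simp add: algebra_simps)
    also have "\<dots> = qfact (Suc a)"
      using qint_Suc_split[OF c] by (simp add: qfact_Suc)
    finally show ?thesis by simp
  qed simp
qed simp

lemma qint_nonzero: "0 < i \<Longrightarrow> qint i \<noteq> 0"
proof
  assume "0 < i" "qint i = 0"
  moreover have "poly (qint i) 1 = of_nat i"
    by (simp add: qint_def poly_sum poly_monom)
  ultimately show False by simp
qed

lemma qfact_nonzero: "qfact a \<noteq> 0"
  by (simp add: qfact_def qint_nonzero)

lemma qbinom_eq_gauss: "b \<le> a \<Longrightarrow> qbinom a b = gauss a b"
  unfolding qbinom_def using qfact_eq_gauss_mult[of b a] qfact_nonzero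
  by (simp add: mult.assoc)

lemma t_poly_eq_sum_gauss: "t_poly n = (\<Sum>k<n. gauss (n - 1 + k) (n - 1))"
  unfolding t_poly_def
proof (rule sum.reindex_bij_witness[where i="\<lambda>k. n - k" and j="\<lambda>s. n - s"])
  fix s assume "s \<in> {1..n}"
  then have "2 * n - s - 1 = n - 1 + (n - s)" by auto
  then show "gauss (n - 1 + (n - s)) (n - 1) = qbinom (2 * n - s - 1) (n - 1)"
    by (simp add: qbinom_eq_gauss)
qed auto

text \<open>Used as rules: \<open>simp\<close> first rewrites \<open>q * e + Suc r\<close> to \<open>Suc (q * e + r)\<close>
  and then fails to evaluate the division.\<close>

lemma mult_add_div_eq: "r < e \<Longrightarrow> (q * e + r) div e = (q::nat)"
  by simp

lemma mult_add_mod_eq: "r < e \<Longrightarrow> (q * e + r) mod e = (r::nat)"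
  by simp

locale prim_root =
  fixes e :: nat and w :: complex
  assumes order_pos: "0 < e" and primitive: "primitive_root e w"
begin

lemma power_order: "w ^ e = 1"
  using primitive by (simp add: primitive_root_def)

lemma power_ne_1: "0 < k \<Longrightarrow> k < e \<Longrightarrow> w ^ k \<noteq> 1"
  using primitive by (simp add: primitive_root_def)

lemma power_mod_order: "w ^ k = w ^ (k mod e)"
proof -
  have "w ^ k = (w ^ e) ^ (k div e) * w ^ (k mod e)"
    by (metis div_mult_mod_eq power_add power_mult mult.commute)
  then show ?thesis by (simp add: power_order)
qed

lemma ipoly_qint: "1 < e \<Longrightarrow> ipoly (qint i) w = (1 - w ^ i) / (1 - w)"
  using power_ne_1[of 1] by (simp add: qint_def ipoly_sum sum_gp_strict)

lemma ipoly_qfact_nonzero: "k < e \<Longrightarrow> ipoly (qfact k) w \<noteq> 0"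
proof -
  assume k: "k < e"
  have "ipoly (qint i) w \<noteq> 0" if "i \<in> {1..k}" for i
    using that k ipoly_qint[of i] power_ne_1[of i] power_ne_1[of 1] by auto
  then show ?thesis by (simp add: qfact_def ipoly_prod)
qed

lemma ipoly_qfact_order: "1 < e \<Longrightarrow> ipoly (qfact e) w = 0"
  using ipoly_qint[of e] power_order order_pos
  by (auto simp: qfact_def ipoly_prod intro: prod_zero)

lemma ipoly_gauss_order: "0 < k \<Longrightarrow> k < e \<Longrightarrow> ipoly (gauss e k) w = 0"
proof -
  assume k: "0 < k" "k < e"
  have "ipoly (qfact e) w = ipoly (gauss e k) w * ipoly (qfact k) w * ipoly (qfact (e - k)) w"
    using qfact_eq_gauss_mult[of k e] k by simp
  moreover have "ipoly (qfact k) w \<noteq> 0" "ipoly (qfact (e - k)) w \<noteq> 0"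
    using ipoly_qfact_nonzero k by auto
  ultimately show ?thesis using ipoly_qfact_order k by simp
qed

lemma q_lucas_step_no_carry:
  assumes r: "r < e" and s: "Suc s < e"
  shows "of_nat (A choose B) * ipoly (gauss r s) w
      + w ^ Suc s * (of_nat (A choose B) * ipoly (gauss r (Suc s)) w)
    = of_nat (((A * e + Suc r) div e) choose B) * ipoly (gauss ((A * e + Suc r) mod e) (Suc s)) w"
proof (cases "Suc r < e")
  case True
  then have "(A * e + Suc r) div e = A" "(A * e + Suc r) mod e = Suc r"
    by (rule mult_add_div_eq, rule mult_add_mod_eq)
  then show ?thesis by (simp add: algebra_simps)
next
  case False
  with r have "Suc r = e" by simp
  then have a: "(A * e + Suc r) div e = Suc A" "(A * e + Suc r) mod e = 0"
    using order_pos by simp_all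
  have "ipoly (gauss r s) w + w ^ Suc s * ipoly (gauss r (Suc s)) w
      = ipoly (gauss (Suc r) (Suc s)) w"
    by simp
  also have "\<dots> = 0"
    using ipoly_gauss_order[of "Suc s"] s \<open>Suc r = e\<close> by simp
  finally have
    "of_nat (A choose B) * (ipoly (gauss r s) w + w ^ Suc s * ipoly (gauss r (Suc s)) w) = 0"
    by simp
  then show ?thesis unfolding a by (simp add: gauss_0_left algebra_simps)
qed

lemma q_lucas_step_carry:
  assumes r: "r < e" and s: "Suc s = e"
  shows "of_nat (A choose B) * ipoly (gauss r s) w + of_nat (A choose Suc B)
    = of_nat (((A * e + Suc r) div e) choose Suc B) * ipoly (gauss ((A * e + Suc r) mod e) 0) w"
proof (cases "Suc r < e")
  case True
  then have "(A * e + Suc r) div e = A" "(A * e + Suc r) mod e = Suc r"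
    by (rule mult_add_div_eq, rule mult_add_mod_eq)
  moreover have "gauss r s = 0"
    using True s by (simp add: gauss_eq_0)
  ultimately show ?thesis by simp
next
  case False
  with r s have "r = s" "Suc r = e" by simp_all
  then have "(A * e + Suc r) div e = Suc A" "(A * e + Suc r) mod e = 0"
    using order_pos by simp_all
  then show ?thesis using \<open>r = s\<close> by simp
qed

lemma q_lucas_step:
  assumes r: "r < e" and s: "s < e"
  shows "of_nat (A choose B) * ipoly (gauss r s) w
      + w ^ Suc s * (of_nat (A choose ((B * e + Suc s) div e))
                     * ipoly (gauss r ((B * e + Suc s) mod e)) w)
    = of_nat (((A * e + Suc r) div e) choose ((B * e + Suc s) div e))
      * ipoly (gauss ((A * e + Suc r) mod e) ((B * e + Suc s) mod e)) w"
proof (cases "Suc s < e")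
  case True
  then have "(B * e + Suc s) div e = B" "(B * e + Suc s) mod e = Suc s"
    by (rule mult_add_div_eq, rule mult_add_mod_eq)
  then show ?thesis using q_lucas_step_no_carry[OF r True] by simp
next
  case False
  with s have "Suc s = e" by simp
  then have "B * e + Suc s = Suc B * e" by simp
  then have "(B * e + Suc s) div e = Suc B" "(B * e + Suc s) mod e = 0" "w ^ Suc s = 1"
    using order_pos power_order \<open>Suc s = e\<close> by simp_all
  then show ?thesis using q_lucas_step_carry[OF r \<open>Suc s = e\<close>] by simp
qed

lemma q_lucas:
  "ipoly (gauss a b) w = of_nat ((a div e) choose (b div e)) * ipoly (gauss (a mod e) (b mod e)) w"
proof (induction a arbitrary: b)
  case 0
  show ?case
    using order_pos by (cases "b div e = 0") (auto simp: gauss_0_left div_eq_0_iff)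
next
  case (Suc a)
  show ?case
  proof (cases b)
    case (Suc c)
    define A r B s where "A = a div e" and "r = a mod e" and "B = c div e" and "s = c mod e"
    have "r < e" "s < e"
      using order_pos by (simp_all add: r_def s_def)
    have sa: "Suc a = A * e + Suc r" and sb: "b = B * e + Suc s" and sc: "Suc c = B * e + Suc s"
      using Suc by (simp_all add: A_def r_def B_def s_def)
    have ih1: "ipoly (gauss a c) w = of_nat (A choose B) * ipoly (gauss r s) w"
      using Suc.IH[of c] by (simp only: A_def r_def B_def s_def)
    have ih2: "ipoly (gauss a (Suc c)) w
        = of_nat (A choose ((B * e + Suc s) div e)) * ipoly (gauss r ((B * e + Suc s) mod e)) w"
      using Suc.IH[of "Suc c"] by (simp only: A_def r_def sc[symmetric])
    have pow: "w ^ Suc c = w ^ Suc s"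
      using power_mod_order[of "Suc c"] power_mod_order[of "Suc s"] unfolding sc by simp
    have "ipoly (gauss (Suc a) b) w = ipoly (gauss a c) w + w ^ Suc c * ipoly (gauss a (Suc c)) w"
      using Suc by simp
    also have "\<dots> = of_nat (A choose B) * ipoly (gauss r s) w
      + w ^ Suc s * (of_nat (A choose ((B * e + Suc s) div e))
                     * ipoly (gauss r ((B * e + Suc s) mod e)) w)"
      by (simp only: ih1 ih2 pow)
    also have "\<dots> = of_nat (((A * e + Suc r) div e) choose ((B * e + Suc s) div e))
      * ipoly (gauss ((A * e + Suc r) mod e) ((B * e + Suc s) mod e)) w"
      by (rule q_lucas_step) fact+
    finally show ?thesis by (simp only: sa sb)
  qed simp
qed

lemma ipoly_gauss_top:
  assumes "r < e"
  shows "ipoly (gauss (q * e + r) (p * e + (e - 1))) w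
    = (if r = e - 1 then of_nat (q choose p) else 0)"
proof -
  have "e - 1 < e" using order_pos by simp
  then have p: "(p * e + (e - 1)) div e = p" "(p * e + (e - 1)) mod e = e - 1"
    by (rule mult_add_div_eq, rule mult_add_mod_eq)
  have q: "(q * e + r) div e = q" "(q * e + r) mod e = r"
    using assms by (rule mult_add_div_eq, rule mult_add_mod_eq)
  show ?thesis
    by (subst q_lucas, unfold p q) (use assms in \<open>auto simp: gauss_eq_0\<close>)
qed

lemma ipoly_gauss_block:
  "(\<Sum>r<e. ipoly (gauss (m * e + (e - 1) + (i * e + r)) (m * e + (e - 1))) w)
    = of_nat ((m + i) choose m)"
proof -
  obtain f where e: "e = Suc f" using order_pos by (cases e) auto
  have first_idx: "m * e + (e - 1) + (i * e + 0) = (m + i) * e + (e - 1)"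
    by (simp add: algebra_simps)
  have first: "ipoly (gauss (m * e + (e - 1) + (i * e + 0)) (m * e + (e - 1))) w
      = of_nat ((m + i) choose m)"
    unfolding first_idx by (subst ipoly_gauss_top) (use e in auto)
  have rest_idx: "m * e + (e - 1) + (i * e + Suc r) = Suc (m + i) * e + r" for r
    using e by (simp add: algebra_simps)
  have rest: "ipoly (gauss (m * e + (e - 1) + (i * e + Suc r)) (m * e + (e - 1))) w = 0"
    if "r < f" for r
    unfolding rest_idx by (subst ipoly_gauss_top) (use that e in auto)
  show ?thesis
    unfolding e sum.lessThan_Suc_shift using first rest by (simp add: e)
qed

lemma ipoly_t_poly:
  assumes "0 < d"
  shows "ipoly (t_poly (d * e)) w = of_nat ((2 * d - 1) choose d)"
proof -
  obtain m where d: "d = Suc m" using assms by (cases d) auto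
  have top: "d * e - 1 = m * e + (e - 1)"
    using d order_pos by (cases e) (simp_all add: algebra_simps)
  have "ipoly (t_poly (d * e)) w
      = (\<Sum>k<d * e. ipoly (gauss (m * e + (e - 1) + k) (m * e + (e - 1))) w)"
    by (simp only: t_poly_eq_sum_gauss ipoly_sum top)
  also have "\<dots> = (\<Sum>i<d. of_nat ((m + i) choose m))"
    by (simp only: sum_lessThan_mult_blocks ipoly_gauss_block)
  also have "\<dots> = of_nat (\<Sum>i\<le>m. (m + i) choose m)"
    using d by (simp add: lessThan_Suc_atMost)
  also have "\<dots> = of_nat ((2 * d - 1) choose d)"
    using choose_rising_sum(1)[of m m] d by (simp add: mult_2)
  finally show ?thesis .
qed

end

section \<open>Maximal laminar families of integer intervals\<close>

lemma card_disjoint_Un_le: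
  assumes "finite A" "X \<union> Y \<subseteq> A" "X \<inter> Y = {}"
  shows "card X + card Y \<le> card A"
proof -
  have "card X + card Y = card (X \<union> Y)"
    using assms by (intro card_Un_disjoint[symmetric]) (auto intro: finite_subset)
  also have "\<dots> \<le> card A" using assms by (intro card_mono)
  finally show ?thesis .
qed

lemma card_disjoint_Un_less:
  assumes "finite A" "X \<union> Y \<subset> A" "X \<inter> Y = {}"
  shows "card X + card Y < card A"
proof -
  have "card X + card Y = card (X \<union> Y)"
    using assms by (intro card_Un_disjoint[symmetric]) (auto intro: finite_subset)
  also have "\<dots> < card A" using assms by (intro psubset_card_mono)
  finally show ?thesis .
qed

text \<open>This is what a triangulation becomes on the universal cover \<open>\<int>\<close> of the boundary
  circle: every boundary arc lifts to intervals in \<open>B\<close>, every radial arc to points in \<open>R\<close>.\<close>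

locale maximal_laminar =
  fixes B :: "(int \<times> int) set" and R :: "int set" and N :: int
  assumes length_bounds: "(u, v) \<in> B \<Longrightarrow> 2 \<le> v - u \<and> v - u \<le> N"
    and laminar: "(u, v) \<in> B \<Longrightarrow> (u', v') \<in> B \<Longrightarrow> \<not> (u < u' \<and> u' < v \<and> v < v')"
    and point_outside: "r \<in> R \<Longrightarrow> (u, v) \<in> B \<Longrightarrow> \<not> (u < r \<and> r < v)"
    and interval_maximal: "2 \<le> v - u \<Longrightarrow> v - u \<le> N \<Longrightarrow>
      (\<And>u' v'. (u', v') \<in> B \<Longrightarrow> \<not> (u < u' \<and> u' < v \<and> v < v') \<and> \<not> (u' < u \<and> u < v' \<and> v' < v)) \<Longrightarrow>
      (\<And>r. r \<in> R \<Longrightarrow> \<not> (u < r \<and> r < v)) \<Longrightarrow> (u, v) \<in> B"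
    and point_maximal: "(\<And>u v. (u, v) \<in> B \<Longrightarrow> \<not> (u < r \<and> r < v)) \<Longrightarrow> r \<in> R"
begin

text \<open>The third vertex of the triangle lying on the inner side of \<open>(u, v)\<close>.\<close>

definition apex :: "int \<Rightarrow> int \<Rightarrow> int" where
  "apex u v = Max ({z. u < z \<and> z < v \<and> (u, z) \<in> B} \<union> {u + 1})"

lemma apex_bounds:
  assumes "u + 2 \<le> v"
  shows "u < apex u v" "apex u v < v" "(u, apex u v) \<in> B \<or> apex u v = u + 1"
    "\<And>z. u < z \<Longrightarrow> z < v \<Longrightarrow> (u, z) \<in> B \<Longrightarrow> z \<le> apex u v"
proof -
  let ?S = "{z. u < z \<and> z < v \<and> (u, z) \<in> B} \<union> {u + 1}"
  have fin: "finite ?S"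
    by (rule finite_subset[of _ "{u..v}"]) (use assms in auto)
  have "apex u v \<in> ?S"
    unfolding apex_def using fin by (rule Max_in) simp
  moreover have "z \<le> apex u v" if "z \<in> ?S" for z
    unfolding apex_def using fin that by (rule Max_ge)
  ultimately show "u < apex u v" "apex u v < v" "(u, apex u v) \<in> B \<or> apex u v = u + 1"
    "\<And>z. u < z \<Longrightarrow> z < v \<Longrightarrow> (u, z) \<in> B \<Longrightarrow> z \<le> apex u v"
    using assms by auto
qed

lemma apex_props:
  assumes "(u, v) \<in> B"
  shows "u < apex u v" "apex u v < v" "(u, apex u v) \<in> B \<or> apex u v = u + 1"
    "\<And>z. u < z \<Longrightarrow> z < v \<Longrightarrow> (u, z) \<in> B \<Longrightarrow> z \<le> apex u v"
  using apex_bounds[of u v] length_bounds[OF assms] by auto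

lemma apex_right:
  assumes uv: "(u, v) \<in> B"
  shows "(apex u v, v) \<in> B \<or> v = apex u v + 1"
proof (cases "v = apex u v + 1")
  case False
  define z where "z = apex u v"
  have z: "u < z" "z < v" "(u, z) \<in> B \<or> z = u + 1"
    "\<And>y. u < y \<Longrightarrow> y < v \<Longrightarrow> (u, y) \<in> B \<Longrightarrow> y \<le> z"
    using apex_props[OF uv] unfolding z_def by auto
  have "(z, v) \<in> B"
  proof (rule interval_maximal)
    show "2 \<le> v - z" "v - z \<le> N" using False z length_bounds[OF uv] unfolding z_def by auto
  next
    fix u' v' assume b: "(u', v') \<in> B"
    have "\<not> (u' < z \<and> z < v' \<and> v' < v)"
    proof
      assume c: "u' < z \<and> z < v' \<and> v' < v"
      consider "u' < u" | "u' = u" | "u < u'" by linarith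
      then show False
      proof cases
        case 1 then show False using laminar[OF b uv] c z by auto
      next
        case 2 then show False using z(4)[of v'] b c z(1) by auto
      next
        case 3
        then have "(u, z) \<in> B" using z c by auto
        then show False using laminar[OF _ b] c 3 by auto
      qed
    qed
    then show "\<not> (z < u' \<and> u' < v \<and> v < v') \<and> \<not> (u' < z \<and> z < v' \<and> v' < v)"
      using laminar[OF uv b] z by auto
  next
    fix r assume "r \<in> R"
    then show "\<not> (z < r \<and> r < v)" using point_outside[OF _ uv] z by auto
  qed
  then show ?thesis unfolding z_def by simp
qed simp

lemma triangle_at_inner_point:
  assumes "(u, v) \<in> B" "u < z" "z < v"
  shows "\<exists>u' v'. (u', v') \<in> B \<and> u' < z \<and> z < v' \<and>
    ((u', z) \<in> B \<or> z = u' + 1) \<and> ((z, v') \<in> B \<or> v' = z + 1)"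
  using assms
proof (induction "nat (v - u)" arbitrary: u v rule: less_induct)
  case less
  define w where "w = apex u v"
  have w: "u < w" "w < v" "(u, w) \<in> B \<or> w = u + 1" "(w, v) \<in> B \<or> v = w + 1"
    using apex_props[OF less.prems(1)] apex_right[OF less.prems(1)] unfolding w_def by auto
  consider "w = z" | "z < w" | "w < z" by linarith
  then show ?case
  proof cases
    case 1 then show ?thesis using less.prems w by blast
  next
    case 2
    then have "(u, w) \<in> B" using w less.prems by auto
    then show ?thesis using less.hyps[of w u] less.prems 2 w by auto
  next
    case 3
    then have "(w, v) \<in> B" using w less.prems by auto
    then show ?thesis using less.hyps[of v w] less.prems 3 w by auto
  qed
qed

lemma nested_if_common_point:
  assumes "(u, v) \<in> B" "(u', v') \<in> B" "u < x" "x < v" "u' < x" "x < v'"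
  shows "(u \<le> u' \<and> v' \<le> v) \<or> (u' \<le> u \<and> v \<le> v')"
  using laminar[OF assms(1,2)] laminar[OF assms(2,1)] assms(3-6) by linarith

lemma apex_not_inside_nested:
  assumes "(u, v) \<in> B" "(u', v') \<in> B" "u \<le> u'" "v' \<le> v" "(u', v') \<noteq> (u, v)"
  shows "\<not> (u' < apex u v \<and> apex u v < v')"
proof
  assume c: "u' < apex u v \<and> apex u v < v'"
  note z = apex_props[OF assms(1)]
  show False
  proof (cases "u' = u")
    case True
    then show False using z(4)[of v'] assms c by auto
  next
    case False
    then have "(u, apex u v) \<in> B" using assms z c by auto
    then show False using laminar[OF _ assms(2)] c False assms(3) by auto
  qed
qed

lemma inj_on_apex: "inj_on (\<lambda>(u, v). apex u v) B"
proof (rule inj_onI, clarify)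
  fix u v u' v' assume b: "(u, v) \<in> B" "(u', v') \<in> B" and eq: "apex u v = apex u' v'"
  show "u = u' \<and> v = v'"
  proof (rule ccontr)
    assume ne: "\<not> (u = u' \<and> v = v')"
    have "u < apex u v" "apex u v < v" "u' < apex u v" "apex u v < v'"
      using apex_props[OF b(1)] apex_props[OF b(2)] eq by auto
    then consider "u \<le> u' \<and> v' \<le> v" | "u' \<le> u \<and> v \<le> v'"
      using nested_if_common_point[OF b] by blast
    then show False
      using apex_not_inside_nested[OF b] apex_not_inside_nested[OF b(2,1)]
        apex_props[OF b(1)] apex_props[OF b(2)] eq ne by cases auto
  qed
qed

lemma card_inside_le:
  assumes pq: "p < q"
    and F: "F \<subseteq> {(u, v). (u, v) \<in> B \<and> p \<le> u \<and> v \<le> q}"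
    and Rs: "Rs \<subseteq> {r. r \<in> R \<and> p < r \<and> r < q}"
  shows "finite F \<and> finite Rs \<and> int (card F) + int (card Rs) \<le> q - p - 1"
proof -
  let ?c = "\<lambda>(u, v). apex u v"
  have "F \<subseteq> {p..q} \<times> {p..q}"
    using F length_bounds by fastforce
  then have finF: "finite F" by (rule finite_subset) simp
  have finR: "finite Rs" using Rs by (rule finite_subset) simp
  have apex_in: "apex u v \<in> {p<..<q} - Rs" if "(u, v) \<in> F" for u v
  proof -
    from that F have "(u, v) \<in> B" "p \<le> u" "v \<le> q" by auto
    then show ?thesis
      using apex_props(1,2)[of u v] point_outside[of "apex u v" u v] Rs by auto
  qed
  then have "?c ` F \<subseteq> {p<..<q}" "?c ` F \<inter> Rs = {}" by auto
  then have "card (?c ` F) + card Rs \<le> card {p<..<q}"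
    using Rs by (intro card_disjoint_Un_le) auto
  moreover have "card (?c ` F) = card F"
    using F by (intro card_image inj_on_subset[OF inj_on_apex]) auto
  ultimately show ?thesis using finF finR pq by simp
qed

definition window_intervals :: "int \<Rightarrow> int \<Rightarrow> (int \<times> int) set" where
  "window_intervals p q = {(u, v) \<in> B. p \<le> u \<and> u < q \<and> (v \<le> q \<or> p < u)}"

definition window_points :: "int \<Rightarrow> int \<Rightarrow> int set" where
  "window_points p q = {r \<in> R. p < r \<and> r < q}"

lemma finite_window_intervals: "finite (window_intervals p q)"
proof (rule finite_subset)
  show "window_intervals p q \<subseteq> {p..q} \<times> {p..q + N}"
    unfolding window_intervals_def using length_bounds by fastforce
qed simp

lemma finite_window_points: "finite (window_points p q)"
  by (rule finite_subset[of _ "{p<..<q}"]) (auto simp: window_points_def)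

lemma window_split:
  assumes "p < z" "z < q"
  shows "window_intervals p z \<union> window_intervals z q \<subseteq> window_intervals p q"
    "window_intervals p z \<inter> window_intervals z q = {}"
    "window_points p z \<union> window_points z q \<subseteq> window_points p q"
    "window_points p z \<inter> window_points z q = {}"
  using assms by (auto simp: window_intervals_def window_points_def)

lemma apex_reaches:
  assumes pq: "p + 2 \<le> q" and reach: "\<And>u v. (u, v) \<in> B \<Longrightarrow> u < p \<Longrightarrow> p < v \<Longrightarrow> q \<le> v"
    and b: "(u, v) \<in> B" "u < apex p q" "apex p q < v"
  shows "q \<le> v"
proof (rule ccontr)
  assume "\<not> q \<le> v"
  note z = apex_bounds[OF pq]
  consider "u < p" | "u = p" | "p < u" by linarith
  then show False
  proof cases
    case 1 then show False using reach[OF b(1) 1] b z \<open>\<not> q \<le> v\<close> by auto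
  next
    case 2 then show False using z(4)[of v] b z(1) \<open>\<not> q \<le> v\<close> by auto
  next
    case 3
    then have "(p, apex p q) \<in> B" using z b by auto
    then show False using laminar[OF _ b(1)] 3 b by auto
  qed
qed

lemma interval_from_apex_beyond:
  assumes pq: "p + 2 \<le> q" and reach: "\<And>u v. (u, v) \<in> B \<Longrightarrow> u < p \<Longrightarrow> p < v \<Longrightarrow> q \<le> v"
    and "(p, q) \<notin> B" and "(u, v) \<in> B" "u < apex p q" "apex p q < v"
  shows "\<exists>v'. (apex p q, v') \<in> B \<and> q < v'"
proof -
  define z where "z = apex p q"
  note z = apex_bounds[OF pq, folded z_def]
  from triangle_at_inner_point[OF assms(4-6)[folded z_def]] obtain u' v'
    where c: "(u', v') \<in> B" "u' < z" "z < v'" "(u', z) \<in> B \<or> z = u' + 1" "(z, v') \<in> B \<or> v' = z + 1"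
    by blast
  have "q \<le> v'" using apex_reaches[OF pq, of u' v'] reach c(1-3) unfolding z_def by blast
  have "v' \<noteq> q"
  proof
    assume vq: "v' = q"
    consider "u' < p" | "u' = p" | "p < u'" by linarith
    then show False
    proof cases
      case 1
      then have "(u', z) \<in> B" using c z by auto
      then show False using reach[of u' z] 1 z by auto
    next
      case 2 then show False using assms(3) c vq by auto
    next
      case 3
      then have "(p, z) \<in> B" using z c by auto
      then show False using laminar[OF _ c(1)] 3 c vq z by auto
    qed
  qed
  with \<open>q \<le> v'\<close> c z show ?thesis unfolding z_def by auto
qed

lemma window_split_strict:
  assumes pq: "p + 2 \<le> q" and reach: "\<And>u v. (u, v) \<in> B \<Longrightarrow> u < p \<Longrightarrow> p < v \<Longrightarrow> q \<le> v"
  defines "z \<equiv> apex p q"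
  shows "window_intervals p z \<union> window_intervals z q \<subset> window_intervals p q
    \<or> window_points p z \<union> window_points z q \<subset> window_points p q"
proof -
  note z = apex_bounds[OF pq, folded z_def]
  note split = window_split[OF z(1,2)]
  consider (interval) "(p, q) \<in> B"
    | (crossed) "(p, q) \<notin> B" "\<exists>u v. (u, v) \<in> B \<and> u < z \<and> z < v"
    | (point) "z \<in> R"
    using point_maximal[of z] by blast
  then show ?thesis
  proof cases
    case interval
    then have "(p, q) \<in> window_intervals p q - (window_intervals p z \<union> window_intervals z q)"
      using z unfolding window_intervals_def by auto
    then show ?thesis using split by blast
  next
    case crossed
    then obtain v' where "(z, v') \<in> B" "q < v'"
      using interval_from_apex_beyond[OF pq] reach unfolding z_def by blast
    then have "(z, v') \<in> window_intervals p q - (window_intervals p z \<union> window_intervals z q)"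
      using z unfolding window_intervals_def by auto
    then show ?thesis using split by blast
  next
    case point
    then have "z \<in> window_points p q - (window_points p z \<union> window_points z q)"
      using z unfolding window_points_def by auto
    then show ?thesis using split by blast
  qed
qed

lemma window_card_ge:
  assumes "p < q" and "\<And>u v. (u, v) \<in> B \<Longrightarrow> u < p \<Longrightarrow> p < v \<Longrightarrow> q \<le> v"
  shows "q - p - 1 \<le> int (card (window_intervals p q)) + int (card (window_points p q))"
  using assms
proof (induction "nat (q - p)" arbitrary: p q rule: less_induct)
  case less
  show ?case
  proof (cases "q = p + 1")
    case False
    with less.prems have pq: "p + 2 \<le> q" by simp
    define z where "z = apex p q"
    note z = apex_bounds[OF pq, folded z_def]
    have "z - p - 1 \<le> int (card (window_intervals p z)) + int (card (window_points p z))"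
      using z less.prems by (intro less.hyps) force+
    moreover have "q - z - 1 \<le> int (card (window_intervals z q)) + int (card (window_points z q))"
      using z apex_reaches[OF pq] less.prems(2) by (intro less.hyps) (auto simp: z_def)
    moreover note split = window_split[OF z(1,2)]
    note le = card_disjoint_Un_le[OF finite_window_intervals split(1,2)]
      card_disjoint_Un_le[OF finite_window_points split(3,4)]
    have "card (window_intervals p z) + card (window_intervals z q) < card (window_intervals p q)
      \<or> card (window_points p z) + card (window_points z q) < card (window_points p q)"
      using window_split_strict[OF pq, folded z_def] less.prems(2)
        card_disjoint_Un_less[OF finite_window_intervals _ split(2)]
        card_disjoint_Un_less[OF finite_window_points _ split(4)] by blast
    ultimately show ?thesis using le by linarith
  qed simp
qed

lemma points_nonempty: "R \<noteq> {}"
proof (cases "B = {}")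
  case True
  then have "0 \<in> R" by (intro point_maximal) auto
  then show ?thesis by blast
next
  case False
  let ?L = "(\<lambda>(u, v). v - u) ` B"
  have finL: "finite ?L"
    by (rule finite_subset[of _ "{2..N}"]) (use length_bounds in auto)
  have "Max ?L \<in> ?L" using False finL by (intro Max_in) auto
  then obtain u v where uv: "(u, v) \<in> B" "v - u = Max ?L" by auto
  have "u \<in> R"
  proof (rule point_maximal)
    fix u' v' assume b: "(u', v') \<in> B"
    show "\<not> (u' < u \<and> u < v')"
    proof
      assume c: "u' < u \<and> u < v'"
      then have "v \<le> v'" using laminar[OF b uv(1)] by auto
      moreover have "v' - u' \<le> Max ?L" using finL b by (intro Max_ge) auto
      ultimately show False using c uv by auto
    qed
  qed
  then show ?thesis by blast
qed

end

section \<open>Triangulations on the universal cover of the boundary\<close>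

definition lifts :: "nat \<Rightarrow> nat \<Rightarrow> int set" where
  "lifts n i = {x. x mod int n = int i}"

lemma mem_lifts_iff:
  assumes "i < n"
  shows "x \<in> lifts n i \<longleftrightarrow> (\<exists>p. x = int i + p * int n)"
proof
  assume "x \<in> lifts n i"
  then have "x mod int n = int i" by (simp add: lifts_def)
  then have "x = int i + (x div int n) * int n"
    by (metis div_mult_mod_eq add.commute)
  then show "\<exists>p. x = int i + p * int n" by blast
next
  assume "\<exists>p. x = int i + p * int n"
  then obtain p where "x = int i + p * int n" by blast
  then show "x \<in> lifts n i" using assms by (simp add: lifts_def)
qed

lemma lifts_shift:
  assumes "x \<in> lifts n i" "u \<in> lifts n i" "y \<in> lifts n j"
  shows "y + (u - x) \<in> lifts n j"
proof -
  have "u mod int n = x mod int n" using assms(1,2) by (simp add: lifts_def)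
  then have "int n dvd (u - x)" by (simp add: mod_eq_dvd_iff)
  then obtain c where "u - x = int n * c" by blast
  then show ?thesis using assms(3) by (simp add: lifts_def)
qed

lemma mem_lifts_iff_nat_mod: "0 < n \<Longrightarrow> x \<in> lifts n i \<longleftrightarrow> i = nat (x mod int n)"
  unfolding lifts_def by auto

lemma lifts_nat_mod: "0 < n \<Longrightarrow> x \<in> lifts n (nat (x mod int n))"
  unfolding lifts_def by simp

lemma lifts_lt:
  assumes "x \<in> lifts n i" "0 < n"
  shows "i < n"
proof -
  have "int i = x mod int n" using assms(1) by (simp add: lifts_def)
  also have "\<dots> < int n" using assms(2) by simp
  finally show ?thesis by simp
qed

definition intervals_cross :: "int \<Rightarrow> int \<Rightarrow> int \<Rightarrow> int \<Rightarrow> bool" where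
  "intervals_cross a b c d \<longleftrightarrow> (a < c \<and> c < b \<and> b < d) \<or> (c < a \<and> a < d \<and> d < b)"

lemma int_multiple_cases: "0 \<le> n \<Longrightarrow> s * n = 0 \<or> n \<le> s * n \<or> s * n \<le> - (n::int)"
proof -
  assume n: "0 \<le> n"
  consider "s = 0" | "1 \<le> s" | "s \<le> -1" by linarith
  then show ?thesis
  proof cases
    case 2 then have "1 * n \<le> s * n" using n by (intro mult_right_mono) auto
    then show ?thesis by simp
  next
    case 3 then have "s * n \<le> (-1) * n" using n by (intro mult_right_mono) auto
    then show ?thesis by simp
  qed simp
qed

lemma not_intervals_cross_shift:
  fixes a k c l t N :: int
  assumes "k \<le> N" "l \<le> N" "0 < k" "0 < l"
    and "(a \<le> c \<and> c + l \<le> a + k) \<or> (c \<le> a \<and> a + k \<le> c + l) \<or> (a + k \<le> c \<and> c + l \<le> a + N)"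
    and "t = 0 \<or> N \<le> t \<or> t \<le> - N"
  shows "\<not> intervals_cross a (a + k) (c + t) (c + t + l)"
  using assms unfolding intervals_cross_def by linarith

lemma Rad_in_arcs [simp]: "Rad i \<in> arcs n \<longleftrightarrow> i < n"
  and Bd_in_arcs [simp]: "Bd i k \<in> arcs n \<longleftrightarrow> i < n \<and> 2 \<le> k \<and> k \<le> n"
  by (auto simp: arcs_def)

lemma compatible_Bd_Bd_lifts_uncrossed:
  assumes "i < n" "j < n" "1 \<le> k" "k \<le> n" "1 \<le> l" "l \<le> n"
    and "compatible n (Bd i k) (Bd j l)"
  shows "\<forall>x\<in>lifts n i. \<forall>y\<in>lifts n j. \<not> intervals_cross x (x + int k) y (y + int l)"
proof -
  from assms(7) obtain m :: int where cond:
    "(int i \<le> int j + m * int n \<and> int j + int l + m * int n \<le> int i + int k) \<or>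
     (int j + m * int n \<le> int i \<and> int i + int k \<le> int j + int l + m * int n) \<or>
     (int i + int k \<le> int j + m * int n \<and> int j + int l + m * int n \<le> int i + int n)"
    by (auto simp: Let_def)
  show ?thesis
  proof (intro ballI)
    fix x y assume "x \<in> lifts n i" "y \<in> lifts n j"
    then obtain p r where p: "x = int i + p * int n" and r: "y = int j + r * int n"
      using mem_lifts_iff assms(1,2) by blast
    have t: "(r - p - m) * int n = 0 \<or> int n \<le> (r - p - m) * int n \<or> (r - p - m) * int n \<le> - int n"
      by (rule int_multiple_cases) simp
    have "\<not> intervals_cross (int i) (int i + int k)
        (int j + m * int n + (r - p - m) * int n) (int j + m * int n + (r - p - m) * int n + int l)"
      by (rule not_intervals_cross_shift[where N="int n"]) (use assms(1-6) cond t in auto)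
    moreover have "int j + m * int n + (r - p - m) * int n = y - p * int n"
      using r by (simp add: algebra_simps)
    ultimately show "\<not> intervals_cross x (x + int k) y (y + int l)"
      using p unfolding intervals_cross_def by auto
  qed
qed

lemma compatible_Bd_Bd_if_lifts_uncrossed:
  assumes "i < n" "j < n" "1 \<le> k" "k \<le> n" "1 \<le> l" "l \<le> n"
    and H: "\<forall>x\<in>lifts n i. \<forall>y\<in>lifts n j. \<not> intervals_cross x (x + int k) y (y + int l)"
  shows "compatible n (Bd i k) (Bd j l)"
proof -
  \<comment> \<open>it suffices to test the lifts \<open>i\<close> and \<open>i + n\<close> of \<open>v\<^sub>i\<close>
    against the lift \<open>c\<close> of \<open>v\<^sub>j\<close> in \<open>[i, i + n)\<close>\<close>
  define c where "c = int i + (int j - int i) mod int n"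
  have c: "c \<in> lifts n j" "int i \<le> c" "c < int i + int n"
    using assms(1,2) unfolding c_def lifts_def by (auto simp: mod_add_right_eq)
  obtain m where m: "c = int j + m * int n" using c(1) mem_lifts_iff assms(2) by blast
  have "int i \<in> lifts n i" "int i + int n \<in> lifts n i" using assms(1) by (auto simp: lifts_def)
  then have h1: "\<not> intervals_cross (int i) (int i + int k) c (c + int l)"
    and h2: "\<not> intervals_cross (int i + int n) (int i + int n + int k) c (c + int l)"
    using H c(1) by blast+
  show ?thesis
  proof (cases "c + int l \<le> int i + int n")
    case True
    then have "(int i \<le> int j + m * int n \<and> int j + int l + m * int n \<le> int i + int k) \<or>
      (int j + m * int n \<le> int i \<and> int i + int k \<le> int j + int l + m * int n) \<or>
      (int i + int k \<le> int j + m * int n \<and> int j + int l + m * int n \<le> int i + int n)"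
      using h1 c m assms(1-6) unfolding intervals_cross_def by linarith
    then show ?thesis by (auto simp: Let_def)
  next
    case False
    then have "int j + (m - 1) * int n \<le> int i \<and> int i + int k \<le> int j + int l + (m - 1) * int n"
      using h2 c m assms(1-6) unfolding intervals_cross_def by (simp add: algebra_simps)
    then show ?thesis by (auto simp: Let_def)
  qed
qed

lemma compatible_Bd_Bd_iff:
  assumes "i < n" "j < n" "1 \<le> k" "k \<le> n" "1 \<le> l" "l \<le> n"
  shows "compatible n (Bd i k) (Bd j l) \<longleftrightarrow>
    (\<forall>x\<in>lifts n i. \<forall>y\<in>lifts n j. \<not> intervals_cross x (x + int k) y (y + int l))"
  using compatible_Bd_Bd_lifts_uncrossed[OF assms] compatible_Bd_Bd_if_lifts_uncrossed[OF assms]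
  by blast

lemma compatible_Rad_Bd_iff:
  assumes "i < n" "j < n"
  shows "compatible n (Rad j) (Bd i k) \<longleftrightarrow> (\<forall>x\<in>lifts n i. \<forall>y\<in>lifts n j. \<not> (x < y \<and> y < x + int k))"
proof
  assume c: "compatible n (Rad j) (Bd i k)"
  show "\<forall>x\<in>lifts n i. \<forall>y\<in>lifts n j. \<not> (x < y \<and> y < x + int k)"
  proof (intro ballI notI)
    fix x y assume x: "x \<in> lifts n i" and y: "y \<in> lifts n j" and xy: "x < y \<and> y < x + int k"
    define t where "t = nat (y - x)"
    have t: "0 < t" "t < k" "int t = y - x" using xy unfolding t_def by auto
    have "int ((i + t) mod n) = (x mod int n + (y - x)) mod int n"
      using x t by (simp add: lifts_def zmod_int)
    also have "\<dots> = int j"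
      using y by (simp add: lifts_def mod_add_left_eq)
    finally show False using c t by auto
  qed
next
  assume H: "\<forall>x\<in>lifts n i. \<forall>y\<in>lifts n j. \<not> (x < y \<and> y < x + int k)"
  have "\<not> (0 < t \<and> t < k \<and> (i + t) mod n = j)" for t
  proof
    assume t: "0 < t \<and> t < k \<and> (i + t) mod n = j"
    then have "int (i + t) mod int n = int j" by (metis of_nat_mod)
    then have "int (i + t) \<in> lifts n j" "int i \<in> lifts n i"
      using assms by (auto simp: lifts_def)
    then show False using H t by fastforce
  qed
  then show "compatible n (Rad j) (Bd i k)" by auto
qed

definition bd_lifts :: "nat \<Rightarrow> parc set \<Rightarrow> (int \<times> int) set" where
  "bd_lifts n T = {(x, y). \<exists>i k. Bd i k \<in> T \<and> x \<in> lifts n i \<and> y = x + int k}"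

definition rad_lifts :: "nat \<Rightarrow> parc set \<Rightarrow> int set" where
  "rad_lifts n T = {x. \<exists>j. Rad j \<in> T \<and> x \<in> lifts n j}"

lemma triangulationsD:
  assumes "T \<in> triangulations n"
  shows "T \<subseteq> arcs n" "\<And>\<alpha> \<beta>. \<alpha> \<in> T \<Longrightarrow> \<beta> \<in> T \<Longrightarrow> compatible n \<alpha> \<beta>"
    "\<And>\<alpha>. \<alpha> \<in> arcs n \<Longrightarrow> (\<And>\<beta>. \<beta> \<in> T \<Longrightarrow> compatible n \<alpha> \<beta>) \<Longrightarrow> \<alpha> \<in> T"
  using assms unfolding triangulations_def by auto

lemma Bd_lift_in_triangulation:
  assumes n: "0 < n" and T: "T \<in> triangulations n"
    and len: "2 \<le> v - u" "v - u \<le> int n"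
    and bd: "\<And>u' v'. (u', v') \<in> bd_lifts n T \<Longrightarrow> \<not> intervals_cross u v u' v'"
    and rad: "\<And>r. r \<in> rad_lifts n T \<Longrightarrow> \<not> (u < r \<and> r < v)"
  shows "(u, v) \<in> bd_lifts n T"
proof -
  define i k where "i = nat (u mod int n)" and "k = nat (v - u)"
  have u: "u \<in> lifts n i" "i < n"
    using lifts_nat_mod[OF n] lifts_lt[OF _ n] unfolding i_def by blast+
  have k: "v = u + int k" "2 \<le> k" "k \<le> n"
    using len unfolding k_def by auto
  have "Bd i k \<in> T"
  proof (rule triangulationsD(3)[OF T])
    show "Bd i k \<in> arcs n" using u k by simp
    fix \<beta> assume \<beta>: "\<beta> \<in> T"
    show "compatible n (Bd i k) \<beta>"
    proof (cases \<beta>)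
      case (Rad j)
      with \<beta> triangulationsD(1)[OF T] have j: "j < n" by auto
      have "\<not> (x < y \<and> y < x + int k)" if x: "x \<in> lifts n i" and y: "y \<in> lifts n j" for x y
      proof -
        have "y + (u - x) \<in> rad_lifts n T"
          using lifts_shift[OF x u(1) y] \<beta> Rad unfolding rad_lifts_def by auto
        then show ?thesis using rad k by force
      qed
      then show ?thesis using Rad compatible_Rad_Bd_iff[OF u(2) j] by simp
    next
      case (Bd j l)
      with \<beta> triangulationsD(1)[OF T] have jl: "j < n" "2 \<le> l" "l \<le> n" by auto
      have "\<not> intervals_cross x (x + int k) y (y + int l)"
        if x: "x \<in> lifts n i" and y: "y \<in> lifts n j" for x y
      proof -
        have "(y + (u - x), y + (u - x) + int l) \<in> bd_lifts n T"
          using lifts_shift[OF x u(1) y] \<beta> Bd unfolding bd_lifts_def by auto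
        from bd[OF this] show ?thesis using k unfolding intervals_cross_def by auto
      qed
      then show ?thesis using Bd compatible_Bd_Bd_iff u k jl by simp
    qed
  qed
  then show ?thesis using u k unfolding bd_lifts_def by auto
qed

lemma Rad_lift_in_triangulation:
  assumes n: "0 < n" and T: "T \<in> triangulations n"
    and bd: "\<And>u v. (u, v) \<in> bd_lifts n T \<Longrightarrow> \<not> (u < r \<and> r < v)"
  shows "r \<in> rad_lifts n T"
proof -
  define j where "j = nat (r mod int n)"
  have r: "r \<in> lifts n j" "j < n"
    using lifts_nat_mod[OF n] lifts_lt[OF _ n] unfolding j_def by blast+
  have "Rad j \<in> T"
  proof (rule triangulationsD(3)[OF T])
    show "Rad j \<in> arcs n" using r by simp
    fix \<beta> assume \<beta>: "\<beta> \<in> T"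
    show "compatible n (Rad j) \<beta>"
    proof (cases \<beta>)
      case (Bd i k)
      with \<beta> triangulationsD(1)[OF T] have i: "i < n" by auto
      have "\<not> (x < y \<and> y < x + int k)" if x: "x \<in> lifts n i" and y: "y \<in> lifts n j" for x y
      proof -
        have "(x + (r - y), x + (r - y) + int k) \<in> bd_lifts n T"
          using lifts_shift[OF y r(1) x] \<beta> Bd unfolding bd_lifts_def by auto
        from bd[OF this] show ?thesis by auto
      qed
      then show ?thesis using Bd compatible_Rad_Bd_iff[OF i r(2)] by simp
    qed simp
  qed
  then show ?thesis using r unfolding rad_lifts_def by auto
qed

lemma maximal_laminar_lifts:
  assumes n: "0 < n" and T: "T \<in> triangulations n"
  shows "maximal_laminar (bd_lifts n T) (rad_lifts n T) (int n)"
proof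
  note TD = triangulationsD[OF T]
  show "2 \<le> v - u \<and> v - u \<le> int n" if "(u, v) \<in> bd_lifts n T" for u v
    using that TD(1) unfolding bd_lifts_def by auto
  show "\<not> (u < u' \<and> u' < v \<and> v < v')"
    if uv: "(u, v) \<in> bd_lifts n T" and uv': "(u', v') \<in> bd_lifts n T" for u v u' v'
  proof -
    obtain i k where a: "Bd i k \<in> T" "u \<in> lifts n i" "v = u + int k"
      using uv unfolding bd_lifts_def by auto
    obtain j l where b: "Bd j l \<in> T" "u' \<in> lifts n j" "v' = u' + int l"
      using uv' unfolding bd_lifts_def by auto
    have "i < n" "2 \<le> k" "k \<le> n" "j < n" "2 \<le> l" "l \<le> n" using a(1) b(1) TD(1) by auto
    then have "\<not> intervals_cross u (u + int k) u' (u' + int l)"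
      using TD(2)[OF a(1) b(1)] compatible_Bd_Bd_iff a(2) b(2) by simp
    then show ?thesis using a b unfolding intervals_cross_def by auto
  qed
  show "\<not> (u < r \<and> r < v)" if r: "r \<in> rad_lifts n T" and uv: "(u, v) \<in> bd_lifts n T" for r u v
  proof -
    obtain j where a: "Rad j \<in> T" "r \<in> lifts n j" using r unfolding rad_lifts_def by auto
    obtain i k where b: "Bd i k \<in> T" "u \<in> lifts n i" "v = u + int k"
      using uv unfolding bd_lifts_def by auto
    have "i < n" "j < n" using a(1) b(1) TD(1) by auto
    then show ?thesis using TD(2)[OF a(1) b(1)] compatible_Rad_Bd_iff a(2) b by simp
  qed
  show "(u, v) \<in> bd_lifts n T"
    if "2 \<le> v - u" "v - u \<le> int n"
      "\<And>u' v'. (u', v') \<in> bd_lifts n T \<Longrightarrow>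
        \<not> (u < u' \<and> u' < v \<and> v < v') \<and> \<not> (u' < u \<and> u < v' \<and> v' < v)"
      "\<And>r. r \<in> rad_lifts n T \<Longrightarrow> \<not> (u < r \<and> r < v)" for u v
    using Bd_lift_in_triangulation[OF n T that(1,2)] that(3,4)
      unfolding intervals_cross_def by blast
  show "r \<in> rad_lifts n T" if "\<And>u v. (u, v) \<in> bd_lifts n T \<Longrightarrow> \<not> (u < r \<and> r < v)" for r
    using Rad_lift_in_triangulation[OF n T] that by blast
qed

section \<open>Start counts and the height function\<close>

fun start :: "parc \<Rightarrow> nat" where
  "start (Rad i) = i"
| "start (Bd i k) = i"

definition start_counts :: "nat \<Rightarrow> parc set \<Rightarrow> nat \<Rightarrow> nat" where
  "start_counts n T i = (if i < n then card {\<alpha> \<in> T. start \<alpha> = i} else 0)"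

definition weak_comps :: "nat \<Rightarrow> (nat \<Rightarrow> nat) set" where
  "weak_comps n = {a. (\<forall>i. n \<le> i \<longrightarrow> a i = 0) \<and> (\<Sum>i<n. a i) = n}"

lemma weak_comps_sum: "a \<in> weak_comps n \<Longrightarrow> (\<Sum>i<n. a i) = n"
  unfolding weak_comps_def by simp

lemma finite_arcs: "finite (arcs n)"
proof (rule finite_subset)
  show "arcs n \<subseteq> Rad ` {..<n} \<union> (\<lambda>(i, k). Bd i k) ` ({..<n} \<times> {..n})"
    unfolding arcs_def by auto
qed simp

lemma finite_triangulation: "T \<in> triangulations n \<Longrightarrow> finite T"
  using triangulationsD(1) finite_arcs finite_subset by blast

lemma start_counts_eq:
  assumes "finite T" "i < n"
  shows "start_counts n T i = card {k. Bd i k \<in> T} + (if Rad i \<in> T then 1 else 0)"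
proof -
  have split: "{\<alpha> \<in> T. start \<alpha> = i} = Bd i ` {k. Bd i k \<in> T} \<union> {\<alpha>. \<alpha> = Rad i \<and> Rad i \<in> T}"
  proof (intro equalityI subsetI)
    fix \<alpha> assume "\<alpha> \<in> {\<alpha> \<in> T. start \<alpha> = i}"
    then show "\<alpha> \<in> Bd i ` {k. Bd i k \<in> T} \<union> {\<alpha>. \<alpha> = Rad i \<and> Rad i \<in> T}" by (cases \<alpha>) auto
  qed auto
  have "finite (Bd i ` {k. Bd i k \<in> T})"
    by (rule finite_subset[OF _ assms(1)]) auto
  then have "card {\<alpha> \<in> T. start \<alpha> = i}
      = card (Bd i ` {k. Bd i k \<in> T}) + card {\<alpha>. \<alpha> = Rad i \<and> Rad i \<in> T}"
    unfolding split by (intro card_Un_disjoint) auto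
  moreover have "card (Bd i ` {k. Bd i k \<in> T}) = card {k. Bd i k \<in> T}"
    by (rule card_image) (auto simp: inj_on_def)
  ultimately show ?thesis using assms(2) unfolding start_counts_def by simp
qed

definition height_incr :: "nat \<Rightarrow> (nat \<Rightarrow> nat) \<Rightarrow> int \<Rightarrow> int" where
  "height_incr n a x = int (a (nat (x mod int n))) - 1"

definition height :: "nat \<Rightarrow> (nat \<Rightarrow> nat) \<Rightarrow> int \<Rightarrow> int" where
  "height n a x = (if 0 \<le> x then (\<Sum>y\<in>{0..<x}. height_incr n a y)
    else - (\<Sum>y\<in>{x..<0}. height_incr n a y))"

lemma height_add_1: "height n a (x + 1) = height n a x + height_incr n a x"
proof (cases "0 \<le> x")
  case True
  then have "{0..<x + 1} = insert x {0..<x}" by auto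
  then show ?thesis using True unfolding height_def by simp
next
  case False
  then have "{x..<0} = insert x {x + 1..<0}" by auto
  then show ?thesis using False unfolding height_def by (cases "x + 1 = 0") simp_all
qed

lemma height_diff: "p \<le> q \<Longrightarrow> height n a q - height n a p = (\<Sum>y\<in>{p..<q}. height_incr n a y)"
proof (induction q rule: int_ge_induct)
  case (step q)
  then have "{p..<q + 1} = insert q {p..<q}" by auto
  then show ?case using step height_add_1[of n a q] by simp
qed simp

lemma sum_period_mod:
  assumes "0 < n"
  shows "(\<Sum>x\<in>{r..<r + int n}. f (nat (x mod int n))) = (\<Sum>i<n. f i)"
proof (rule sum.reindex_bij_betw)
  show "bij_betw (\<lambda>x. nat (x mod int n)) {r..<r + int n} {..<n}"
  proof (rule bij_betwI')
    fix x y assume x: "x \<in> {r..<r + int n}" and y: "y \<in> {r..<r + int n}"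
    show "(nat (x mod int n) = nat (y mod int n)) = (x = y)"
    proof
      assume "nat (x mod int n) = nat (y mod int n)"
      moreover have "0 \<le> x mod int n" "0 \<le> y mod int n" using assms by simp_all
      ultimately have "x mod int n = y mod int n" by simp
      then obtain c where c: "x - y = int n * c" by (metis mod_eq_dvd_iff dvd_def)
      have "\<bar>x - y\<bar> < int n" using x y by auto
      moreover have "c * int n = 0 \<or> int n \<le> c * int n \<or> c * int n \<le> - int n"
        by (rule int_multiple_cases) simp
      ultimately show "x = y" using c by (auto simp: mult.commute)
    qed simp
  next
    fix x assume "x \<in> {r..<r + int n}"
    show "nat (x mod int n) \<in> {..<n}" using assms by (simp add: nat_less_iff)
  next
    fix i assume i: "i \<in> {..<n}"
    define x where "x = r + (int i - r) mod int n"
    have "x \<in> {r..<r + int n}" using assms unfolding x_def by auto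
    moreover have "i = nat (x mod int n)" using i unfolding x_def by (simp add: mod_add_right_eq)
    ultimately show "\<exists>x\<in>{r..<r + int n}. i = nat (x mod int n)" by blast
  qed
qed

context
  fixes n :: nat and a :: "nat \<Rightarrow> nat"
  assumes n: "0 < n" and sum_a: "(\<Sum>i<n. a i) = n"
begin

lemma height_add_period: "height n a (x + int n) = height n a x"
proof -
  have "height n a (x + int n) - height n a x = (\<Sum>y\<in>{x..<x + int n}. height_incr n a y)"
    by (rule height_diff) simp
  also have "\<dots> = (\<Sum>i<n. int (a i) - 1)"
    unfolding height_incr_def by (rule sum_period_mod[OF n])
  also have "\<dots> = 0" using sum_a by (simp add: sum_subtractf flip: of_nat_sum)
  finally show ?thesis by simp
qed

lemma height_add_mult_period: "height n a (x + p * int n) = height n a x"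
proof -
  have pos: "height n a (x + int m * int n) = height n a x" for m :: nat and x :: int
  proof (induction m arbitrary: x)
    case (Suc m)
    have "height n a (x + int (Suc m) * int n) = height n a ((x + int m * int n) + int n)"
      by (simp add: algebra_simps)
    also have "\<dots> = height n a x" using height_add_period Suc.IH by simp
    finally show ?case .
  qed simp
  show ?thesis
  proof (cases "0 \<le> p")
    case True then show ?thesis using pos[where m="nat p"] by simp
  next
    case False
    then have "(x + p * int n) + int (nat (- p)) * int n = x" by (simp add: algebra_simps)
    then show ?thesis using pos[where m="nat (- p)" and x="x + p * int n"] by metis
  qed
qed

lemma height_lifts_shift:
  assumes "x \<in> lifts n i" "y \<in> lifts n i"
  shows "height n a (x + c) - height n a x = height n a (y + c) - height n a y"
proof -
  have "x mod int n = y mod int n" using assms by (simp add: lifts_def)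
  then have "int n dvd x - y" by (simp add: mod_eq_dvd_iff)
  then obtain p where "x - y = int n * p" by (elim dvdE)
  then have "x = y + p * int n" and "x + c = (y + c) + p * int n" by (simp_all add: algebra_simps)
  then show ?thesis by (simp only: height_add_mult_period)
qed

end

definition arcs_of_comp :: "nat \<Rightarrow> (nat \<Rightarrow> nat) \<Rightarrow> parc set" where
  "arcs_of_comp n a =
    {Rad i | i. i < n \<and> (\<forall>m. 1 \<le> m \<and> m \<le> n \<longrightarrow> height n a (int i) \<le> height n a (int i + int m))} \<union>
    {Bd i m | i m. i < n \<and> 2 \<le> m \<and> m \<le> n \<and> height n a (int i) - 1 \<le> height n a (int i + int m) \<and>
       (\<forall>t. 0 < t \<and> t < m \<longrightarrow> height n a (int i + int m) < height n a (int i + int t))}"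

lemma arcs_of_comp_subset: "arcs_of_comp n a \<subseteq> arcs n"
  unfolding arcs_of_comp_def arcs_def by auto

context
  fixes n :: nat and T :: "parc set"
  assumes n: "0 < n" and T: "T \<in> triangulations n"
begin

interpretation L: maximal_laminar "bd_lifts n T" "rad_lifts n T" "int n"
  by (rule maximal_laminar_lifts[OF n T])

abbreviation hgt :: "int \<Rightarrow> int" where
  "hgt \<equiv> height n (start_counts n T)"

abbreviation bd_lifts_from :: "int \<Rightarrow> int \<Rightarrow> (int \<times> int) set" where
  "bd_lifts_from p q \<equiv> {(u, v). (u, v) \<in> bd_lifts n T \<and> p \<le> u \<and> u < q}"

abbreviation rad_lifts_from :: "int \<Rightarrow> int \<Rightarrow> int set" where
  "rad_lifts_from p q \<equiv> {x. x \<in> rad_lifts n T \<and> p \<le> x \<and> x < q}"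

lemma finite_bd_lifts_from: "finite (bd_lifts_from p q)"
proof (rule finite_subset)
  show "bd_lifts_from p q \<subseteq> {p..q} \<times> {p..q + int n}" using L.length_bounds by fastforce
qed simp

lemma finite_rad_lifts_from: "finite (rad_lifts_from p q)"
  by (rule finite_subset[of _ "{p..<q}"]) auto

lemma card_bd_lifts_at:
  "card {v. (x, v) \<in> bd_lifts n T} = card {k. Bd (nat (x mod int n)) k \<in> T}"
proof -
  have "{v. (x, v) \<in> bd_lifts n T} = (\<lambda>k. x + int k) ` {k. Bd (nat (x mod int n)) k \<in> T}"
    using mem_lifts_iff_nat_mod[OF n] unfolding bd_lifts_def by auto
  then show ?thesis by (simp add: card_image inj_on_def)
qed

lemma mem_rad_lifts_iff: "x \<in> rad_lifts n T \<longleftrightarrow> Rad (nat (x mod int n)) \<in> T"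
  using mem_lifts_iff_nat_mod[OF n] unfolding rad_lifts_def by auto

lemma height_incr_lifts:
  "height_incr n (start_counts n T) x
    = int (card {v. (x, v) \<in> bd_lifts n T}) + (if x \<in> rad_lifts n T then 1 else 0) - 1"
proof -
  have "nat (x mod int n) < n" using n by (simp add: nat_less_iff)
  then show ?thesis
    using start_counts_eq[OF finite_triangulation[OF T]] card_bd_lifts_at mem_rad_lifts_iff
    by (simp add: height_incr_def)
qed

lemma height_diff_count:
  assumes "p \<le> q"
  shows "hgt q - hgt p = int (card (bd_lifts_from p q)) + int (card (rad_lifts_from p q)) - (q - p)"
proof -
  have "finite {v. (x, v) \<in> bd_lifts n T}" for x
  proof (rule finite_subset)
    show "{v. (x, v) \<in> bd_lifts n T} \<subseteq> {x..x + int n}" using L.length_bounds by fastforce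
  qed simp
  then have "(\<Sum>y\<in>{p..<q}. int (card {v. (y, v) \<in> bd_lifts n T}))
      = int (card (Sigma {p..<q} (\<lambda>y. {v. (y, v) \<in> bd_lifts n T})))"
    by simp
  also have "Sigma {p..<q} (\<lambda>y. {v. (y, v) \<in> bd_lifts n T}) = bd_lifts_from p q" by auto
  finally have bd:
    "(\<Sum>y\<in>{p..<q}. int (card {v. (y, v) \<in> bd_lifts n T})) = int (card (bd_lifts_from p q))" .
  have "(\<Sum>y\<in>{p..<q}. if y \<in> rad_lifts n T then 1 else 0) = int (card ({p..<q} \<inter> rad_lifts n T))"
    by (simp add: sum.If_cases)
  also have "{p..<q} \<inter> rad_lifts n T = rad_lifts_from p q" by auto
  finally have rad:
    "(\<Sum>y\<in>{p..<q}. if y \<in> rad_lifts n T then 1 else 0) = int (card (rad_lifts_from p q))" .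
  have "hgt q - hgt p = (\<Sum>y\<in>{p..<q}. height_incr n (start_counts n T) y)"
    by (rule height_diff[OF assms])
  also have "\<dots> = int (card (bd_lifts_from p q)) + int (card (rad_lifts_from p q)) - (q - p)"
    unfolding height_incr_lifts using assms bd rad by (simp add: sum.distrib sum_subtractf)
  finally show ?thesis .
qed

lemma height_rad_le:
  assumes r: "r \<in> rad_lifts n T" and m: "1 \<le> m"
  shows "hgt r \<le> hgt (r + m)"
proof -
  have "r + m - r - 1
      \<le> int (card (L.window_intervals r (r + m))) + int (card (L.window_points r (r + m)))"
    using m L.point_outside[OF r] by (intro L.window_card_ge) auto
  moreover have "card (L.window_intervals r (r + m)) \<le> card (bd_lifts_from r (r + m))"
    by (rule card_mono[OF finite_bd_lifts_from]) (auto simp: L.window_intervals_def)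
  moreover have "card (insert r (L.window_points r (r + m))) \<le> card (rad_lifts_from r (r + m))"
    by (rule card_mono[OF finite_rad_lifts_from]) (use r m in \<open>auto simp: L.window_points_def\<close>)
  then have "card (L.window_points r (r + m)) + 1 \<le> card (rad_lifts_from r (r + m))"
    using L.finite_window_points by (simp add: L.window_points_def)
  ultimately show ?thesis using height_diff_count[of r "r + m"] m by simp
qed

lemma height_bd_ge:
  assumes b: "(x, y) \<in> bd_lifts n T"
  shows "hgt x - 1 \<le> hgt y"
proof -
  have xy: "x < y" using L.length_bounds[OF b] by simp
  have "y - x - 1 \<le> int (card (L.window_intervals x y)) + int (card (L.window_points x y))"
    using xy L.laminar b by (intro L.window_card_ge) fastforce+
  moreover have "card (L.window_intervals x y) \<le> card (bd_lifts_from x y)"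
    by (rule card_mono[OF finite_bd_lifts_from]) (auto simp: L.window_intervals_def)
  moreover have "card (L.window_points x y) \<le> card (rad_lifts_from x y)"
    by (rule card_mono[OF finite_rad_lifts_from]) (auto simp: L.window_points_def)
  ultimately show ?thesis using height_diff_count[of x y] xy by simp
qed

lemma height_bd_inner_lt:
  assumes b: "(x, y) \<in> bd_lifts n T" and z: "x < z" "z < y"
  shows "hgt y < hgt z"
proof -
  have "bd_lifts_from z y \<subseteq> {(u, v). (u, v) \<in> bd_lifts n T \<and> z \<le> u \<and> v \<le> y}"
    using L.laminar[OF b] z by fastforce
  then have "int (card (bd_lifts_from z y)) \<le> y - z - 1"
    using L.card_inside_le[of z y _ "{}"] z by auto
  moreover have "rad_lifts_from z y = {}"
    using L.point_outside[of _ x y] b z by fastforce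
  then have "card (rad_lifts_from z y) = 0" by (simp only: card.empty)
  ultimately show ?thesis using height_diff_count[of z y] z by linarith
qed

text \<open>Over one period starting at a radial lift the height can neither drop
  (\<open>height_rad_le\<close>) nor rise (\<open>card_inside_le\<close>).\<close>

lemma sum_start_counts: "(\<Sum>i<n. start_counts n T i) = n"
proof -
  obtain r where r: "r \<in> rad_lifts n T" using L.points_nonempty by blast
  have rn: "r + int n \<in> rad_lifts n T" using r unfolding mem_rad_lifts_iff by simp
  let ?Rs = "{x. x \<in> rad_lifts n T \<and> r < x \<and> x < r + int n}"
  have "bd_lifts_from r (r + int n) \<subseteq> {(u, v). (u, v) \<in> bd_lifts n T \<and> r \<le> u \<and> v \<le> r + int n}"
  proof clarify
    fix u v assume uv: "(u, v) \<in> bd_lifts n T" "r \<le> u" "u < r + int n"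
    show "v \<le> r + int n"
    proof (cases "u = r")
      case True then show ?thesis using L.length_bounds[OF uv(1)] by auto
    next
      case False then show ?thesis using L.point_outside[OF rn uv(1)] uv by auto
    qed
  qed
  then have up: "finite ?Rs \<and> int (card (bd_lifts_from r (r + int n))) + int (card ?Rs) \<le> int n - 1"
    using L.card_inside_le[of r "r + int n"] n by auto
  have "rad_lifts_from r (r + int n) = insert r ?Rs" using r n by auto
  then have "card (rad_lifts_from r (r + int n)) = card ?Rs + 1" using up by simp
  then have "hgt (r + int n) - hgt r \<le> 0" using height_diff_count[of r "r + int n"] up by simp
  then have "hgt (r + int n) - hgt r = 0" using height_rad_le[OF r, of "int n"] n by simp
  then have "(\<Sum>y\<in>{r..<r + int n}. height_incr n (start_counts n T) y) = 0"
    using height_diff[of r "r + int n"] by simp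
  moreover have "(\<Sum>y\<in>{r..<r + int n}. height_incr n (start_counts n T) y)
      = (\<Sum>i<n. int (start_counts n T i) - 1)"
    unfolding height_incr_def by (rule sum_period_mod[OF n])
  ultimately have "(\<Sum>i<n. int (start_counts n T i) - 1) = 0" by simp
  then show ?thesis by (simp add: sum_subtractf flip: of_nat_sum)
qed

lemma triangulation_subset_arcs_of_comp: "T \<subseteq> arcs_of_comp n (start_counts n T)"
proof
  fix \<alpha> assume a: "\<alpha> \<in> T"
  show "\<alpha> \<in> arcs_of_comp n (start_counts n T)"
  proof (cases \<alpha>)
    case (Rad i)
    with a triangulationsD(1)[OF T] have i: "i < n" by auto
    then have "int i \<in> rad_lifts n T" using a Rad unfolding mem_rad_lifts_iff by simp
    then have "\<forall>m. 1 \<le> m \<and> m \<le> n \<longrightarrow> hgt (int i) \<le> hgt (int i + int m)"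
      using height_rad_le by simp
    then show ?thesis using Rad i unfolding arcs_of_comp_def by auto
  next
    case (Bd i m)
    with a triangulationsD(1)[OF T] have im: "i < n" "2 \<le> m" "m \<le> n" by auto
    then have b: "(int i, int i + int m) \<in> bd_lifts n T"
      using a Bd unfolding bd_lifts_def lifts_def by auto
    have "\<forall>t. 0 < t \<and> t < m \<longrightarrow> hgt (int i + int m) < hgt (int i + int t)"
      using height_bd_inner_lt[OF b] by simp
    then show ?thesis using height_bd_ge[OF b] Bd im unfolding arcs_of_comp_def by auto
  qed
qed

end

definition strict_minima :: "(nat \<Rightarrow> int) \<Rightarrow> int \<Rightarrow> nat \<Rightarrow> nat set" where
  "strict_minima f c N = {m. 2 \<le> m \<and> m \<le> N \<and> c \<le> f m \<and> (\<forall>t. 0 < t \<and> t < m \<longrightarrow> f m < f t)}"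

lemma strict_minima_Suc:
  assumes "1 \<le> N"
  shows "strict_minima f c (Suc N) = strict_minima f c N \<union>
    (if c \<le> f (Suc N) \<and> f (Suc N) < Min (f ` {1..N}) then {Suc N} else {})"
proof -
  have new_min: "(\<forall>t. 0 < t \<and> t < Suc N \<longrightarrow> f (Suc N) < f t) \<longleftrightarrow> f (Suc N) < Min (f ` {1..N})"
    using assms by (auto simp: Suc_le_eq)
  have "strict_minima f c (Suc N) = strict_minima f c N \<union>
      {m. m = Suc N \<and> 2 \<le> m \<and> c \<le> f m \<and> (\<forall>t. 0 < t \<and> t < m \<longrightarrow> f m < f t)}"
    unfolding strict_minima_def by (auto simp: le_Suc_eq)
  also have "{m. m = Suc N \<and> 2 \<le> m \<and> c \<le> f m \<and> (\<forall>t. 0 < t \<and> t < m \<longrightarrow> f m < f t)}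
      = (if c \<le> f (Suc N) \<and> f (Suc N) < Min (f ` {1..N}) then {Suc N} else {})"
    using new_min assms by auto
  finally show ?thesis .
qed

text \<open>A walk whose down-steps have size at most one visits every level between its start
  and its minimum, so the new minima are counted by the total descent.\<close>

lemma card_strict_minima:
  fixes f :: "nat \<Rightarrow> int"
  assumes down: "\<And>m. f m - 1 \<le> f (Suc m)" and "1 \<le> N"
  shows "card (strict_minima f c N) = nat (f 1 - max c (Min (f ` {1..N})))"
  using \<open>1 \<le> N\<close>
proof (induction N rule: dec_induct)
  case base
  have "strict_minima f c 1 = {}" by (auto simp: strict_minima_def)
  then show ?case by simp
next
  case (step N)
  define M where "M = Min (f ` {1..N})"
  have fin: "finite (strict_minima f c N)" and new: "Suc N \<notin> strict_minima f c N"
    by (rule finite_subset[of _ "{..N}"]) (auto simp: strict_minima_def)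
  have M: "M \<le> f 1" "M \<le> f N" unfolding M_def using step.hyps(1) by (auto intro: Min_le)
  have "f ` {1..Suc N} = insert (f (Suc N)) (f ` {1..N})"
    using step.hyps(1) by (auto simp: atLeastAtMostSuc_conv)
  then have new_min: "Min (f ` {1..Suc N}) = min M (f (Suc N))"
    unfolding M_def using step.hyps(1) by (simp add: min.commute)
  note split = strict_minima_Suc[OF step.hyps(1), folded M_def]
  show ?case
  proof (cases "f (Suc N) < M")
    case True
    then have "f (Suc N) = M - 1" using down[of N] M by simp
    then show ?thesis
      using step.IH new_min M fin new split
        unfolding M_def by (cases "c \<le> M - 1") (auto simp: max_def)
  next
    case False
    then show ?thesis using step.IH new_min split unfolding M_def by (simp add: min_def)
  qed
qed

definition rel_height :: "nat \<Rightarrow> (nat \<Rightarrow> nat) \<Rightarrow> nat \<Rightarrow> nat \<Rightarrow> int" where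
  "rel_height n a i m = height n a (int i + int m) - height n a (int i)"

lemma rel_height_Suc_ge: "rel_height n a i m - 1 \<le> rel_height n a i (Suc m)"
  using height_add_1[of n a "int i + int m"] by (simp add: rel_height_def height_incr_def ac_simps)

lemma rel_height_1: "i < n \<Longrightarrow> rel_height n a i 1 = int (a i) - 1"
  using height_add_1[of n a "int i"] by (simp add: rel_height_def height_incr_def)

lemma Bd_arcs_of_comp_eq:
  "i < n \<Longrightarrow> {m. Bd i m \<in> arcs_of_comp n a} = strict_minima (rel_height n a i) (-1) n"
  unfolding arcs_of_comp_def strict_minima_def rel_height_def by auto

lemma Rad_arcs_of_comp_iff:
  "i < n \<Longrightarrow> Rad i \<in> arcs_of_comp n a \<longleftrightarrow> (\<forall>m\<in>{1..n}. 0 \<le> rel_height n a i m)"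
  unfolding arcs_of_comp_def rel_height_def by auto

context
  fixes n :: nat and a :: "nat \<Rightarrow> nat"
  assumes n: "0 < n" and a: "a \<in> weak_comps n"
begin

lemma start_counts_arcs_of_comp_lt:
  assumes i: "i < n"
  shows "start_counts n (arcs_of_comp n a) i = a i"
proof -
  define M where "M = Min (rel_height n a i ` {1..n})"
  have M: "M \<le> rel_height n a i m" if "m \<in> {1..n}" for m
    unfolding M_def using that by (intro Min_le) auto
  have "M \<in> rel_height n a i ` {1..n}"
    unfolding M_def using n by (intro Min_in) auto
  then have Rad_iff: "Rad i \<in> arcs_of_comp n a \<longleftrightarrow> 0 \<le> M"
    using Rad_arcs_of_comp_iff[OF i] M by force
  have "rel_height n a i n = 0"
    using height_add_period[OF n weak_comps_sum[OF a]] by (simp add: rel_height_def)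
  then have "M \<le> 0" using M[of n] n by simp
  have "finite (arcs_of_comp n a)"
    using arcs_of_comp_subset finite_arcs finite_subset by blast
  then have "start_counts n (arcs_of_comp n a) i
      = nat (rel_height n a i 1 - max (-1) M) + (if 0 \<le> M then 1 else 0)"
    using start_counts_eq[OF _ i] Bd_arcs_of_comp_eq[OF i] Rad_iff n
      card_strict_minima[of "rel_height n a i", OF rel_height_Suc_ge]
    by (simp add: M_def)
  also have "\<dots> = a i"
    using rel_height_1[OF i] M[of 1] n \<open>M \<le> 0\<close> by (cases "0 \<le> M") auto
  finally show ?thesis .
qed

lemma start_counts_arcs_of_comp: "start_counts n (arcs_of_comp n a) = a"
proof
  fix i show "start_counts n (arcs_of_comp n a) i = a i"
    using start_counts_arcs_of_comp_lt[of i] a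
    by (cases "i < n") (auto simp: start_counts_def weak_comps_def)
qed

lemma height_Rad_min:
  assumes "Rad i \<in> arcs_of_comp n a"
  shows "height n a (int i) \<le> height n a y"
proof -
  define m p where "m = (y - int i - 1) mod int n + 1" and "p = (y - int i - 1) div int n"
  have "(y - int i - 1) mod int n < int n" "0 \<le> (y - int i - 1) mod int n" using n by simp_all
  then have m: "1 \<le> nat m" "nat m \<le> n" unfolding m_def by linarith+
  have "y = (int i + int (nat m)) + p * int n"
    using m unfolding m_def p_def by (simp add: algebra_simps)
  then have y: "height n a y = height n a (int i + int (nat m))"
    using height_add_mult_period[OF n weak_comps_sum[OF a]] by metis
  have "\<forall>m. 1 \<le> m \<and> m \<le> n \<longrightarrow> height n a (int i) \<le> height n a (int i + int m)"
    using assms unfolding arcs_of_comp_def by auto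
  then have "height n a (int i) \<le> height n a (int i + int (nat m))" using m by blast
  then show ?thesis unfolding y .
qed

lemma height_Rad_lift_min:
  assumes "Rad j \<in> arcs_of_comp n a" "y \<in> lifts n j"
  shows "height n a y \<le> height n a z"
proof -
  have "j < n" using assms(1) unfolding arcs_of_comp_def by auto
  then obtain p where "y = int j + p * int n" using assms(2) mem_lifts_iff by blast
  then have "height n a y = height n a (int j)"
    using height_add_mult_period[OF n weak_comps_sum[OF a]] by simp
  then show ?thesis using height_Rad_min[OF assms(1)] by simp
qed

lemma height_Bd_lift:
  assumes "Bd i m \<in> arcs_of_comp n a" "x \<in> lifts n i"
  shows "height n a x - 1 \<le> height n a (x + int m)"
    "\<And>t. 0 < t \<Longrightarrow> t < m \<Longrightarrow> height n a (x + int m) < height n a (x + int t)"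
proof -
  have i: "i < n" and H: "height n a (int i) - 1 \<le> height n a (int i + int m)"
    "\<forall>t. 0 < t \<and> t < m \<longrightarrow> height n a (int i + int m) < height n a (int i + int t)"
    using assms(1) unfolding arcs_of_comp_def by auto
  have "int i \<in> lifts n i" using i by (simp add: lifts_def)
  then have C: "height n a (x + c) - height n a x = height n a (int i + c) - height n a (int i)"
    for c
    using height_lifts_shift[OF n weak_comps_sum[OF a] assms(2)] by blast
  show "height n a x - 1 \<le> height n a (x + int m)" using C[of "int m"] H by simp
  show "height n a (x + int m) < height n a (x + int t)" if "0 < t" "t < m" for t
  proof -
    have "height n a (int i + int m) < height n a (int i + int t)" using H(2) that by blast
    then show ?thesis using C[of "int m"] C[of "int t"] by linarith
  qed
qed

lemma arcs_of_comp_compatible_Rad_Bd: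
  assumes r: "Rad j \<in> arcs_of_comp n a" and b: "Bd i k \<in> arcs_of_comp n a"
  shows "compatible n (Rad j) (Bd i k)"
proof -
  have ij: "i < n" "j < n" using r b unfolding arcs_of_comp_def by auto
  have "\<not> (x < y \<and> y < x + int k)" if x: "x \<in> lifts n i" and y: "y \<in> lifts n j" for x y
  proof
    assume xy: "x < y \<and> y < x + int k"
    define t where "t = nat (y - x)"
    have t: "0 < t" "t < k" "x + int t = y" using xy unfolding t_def by auto
    have "height n a (x + int k) < height n a y" using height_Bd_lift(2)[OF b x t(1,2)] t(3) by simp
    moreover have "height n a y \<le> height n a (x + int k)" using height_Rad_lift_min[OF r y] .
    ultimately show False by simp
  qed
  then show ?thesis using compatible_Rad_Bd_iff[OF ij] by simp
qed

lemma arcs_of_comp_Bd_not_overlapping: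
  assumes x: "Bd i k \<in> arcs_of_comp n a" "x \<in> lifts n i"
    and y: "Bd j l \<in> arcs_of_comp n a" "y \<in> lifts n j"
  shows "\<not> (x < y \<and> y < x + int k \<and> x + int k < y + int l)"
proof
  assume c: "x < y \<and> y < x + int k \<and> x + int k < y + int l"
  define t s where "t = nat (y - x)" and "s = nat (x + int k - y)"
  have t: "0 < t" "t < k" "x + int t = y" and s: "0 < s" "s < l" "y + int s = x + int k"
    using c unfolding t_def s_def by auto
  have "height n a (x + int k) < height n a y" using height_Bd_lift(2)[OF x t(1,2)] t(3) by simp
  moreover have "height n a (y + int l) < height n a (x + int k)"
    using height_Bd_lift(2)[OF y s(1,2)] s(3) by simp
  moreover have "height n a y - 1 \<le> height n a (y + int l)" using height_Bd_lift(1)[OF y] .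
  ultimately show False by simp
qed

lemma arcs_of_comp_compatible_Bd_Bd:
  assumes b1: "Bd i k \<in> arcs_of_comp n a" and b2: "Bd j l \<in> arcs_of_comp n a"
  shows "compatible n (Bd i k) (Bd j l)"
proof -
  have p: "i < n" "j < n" "1 \<le> k" "k \<le> n" "1 \<le> l" "l \<le> n"
    using b1 b2 unfolding arcs_of_comp_def by auto
  have "\<not> intervals_cross x (x + int k) y (y + int l)"
    if x: "x \<in> lifts n i" and y: "y \<in> lifts n j" for x y
    using arcs_of_comp_Bd_not_overlapping[OF b1 x b2 y]
      arcs_of_comp_Bd_not_overlapping[OF b2 y b1 x]
    unfolding intervals_cross_def by auto
  then show ?thesis using compatible_Bd_Bd_iff[OF p] by simp
qed

lemma arcs_of_comp_compatible:
  assumes "\<alpha> \<in> arcs_of_comp n a" "\<beta> \<in> arcs_of_comp n a"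
  shows "compatible n \<alpha> \<beta>"
proof (cases \<alpha>)
  case (Bd i k)
  then show ?thesis
    using assms arcs_of_comp_compatible_Rad_Bd arcs_of_comp_compatible_Bd_Bd by (cases \<beta>) simp_all
qed (use assms arcs_of_comp_compatible_Rad_Bd in \<open>cases \<beta>; simp\<close>)

end

section \<open>Triangulations are weak compositions\<close>

lemma compatible_refl: "compatible n \<alpha> \<alpha>"
  by (cases \<alpha>) (auto simp: Let_def intro!: exI[where x = 0])

lemma compatible_sym:
  assumes "\<alpha> \<in> arcs n" "\<beta> \<in> arcs n"
  shows "compatible n \<alpha> \<beta> = compatible n \<beta> \<alpha>"
proof (cases \<alpha>)
  case (Bd i k)
  show ?thesis
  proof (cases \<beta>)
    case (Bd j l)
    with assms \<open>\<alpha> = Bd i k\<close> have p: "i < n" "j < n" "1 \<le> k" "k \<le> n" "1 \<le> l" "l \<le> n" by auto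
    have "intervals_cross a b c d = intervals_cross c d a b" for a b c d
      unfolding intervals_cross_def by auto
    then show ?thesis
      unfolding \<open>\<alpha> = Bd i k\<close> Bd compatible_Bd_Bd_iff[OF p] compatible_Bd_Bd_iff[OF p(2,1,5,6,3,4)]
      by blast
  qed (simp add: \<open>\<alpha> = Bd i k\<close>)
qed (cases \<beta>; simp)

lemma compatible_subset_triangulation:
  assumes "S \<subseteq> arcs n" "\<And>\<alpha> \<beta>. \<alpha> \<in> S \<Longrightarrow> \<beta> \<in> S \<Longrightarrow> compatible n \<alpha> \<beta>"
  shows "\<exists>T \<in> triangulations n. S \<subseteq> T"
proof -
  let ?C = "{T. S \<subseteq> T \<and> T \<subseteq> arcs n \<and> (\<forall>\<alpha>\<in>T. \<forall>\<beta>\<in>T. compatible n \<alpha> \<beta>)}"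
  have fin: "finite ?C" by (rule finite_subset[of _ "Pow (arcs n)"]) (auto simp: finite_arcs)
  have "S \<in> ?C" using assms by auto
  then have "?C \<noteq> {}" by blast
  from finite_has_maximal[OF fin this] obtain T
    where T: "T \<in> ?C" and max: "\<forall>T'\<in>?C. T \<le> T' \<longrightarrow> T = T'"
    by blast
  then have T_arcs: "T \<subseteq> arcs n" and T_compat: "\<And>\<alpha> \<beta>. \<alpha> \<in> T \<Longrightarrow> \<beta> \<in> T \<Longrightarrow> compatible n \<alpha> \<beta>"
    by auto
  have "T \<in> triangulations n"
    unfolding triangulations_def
  proof (intro CollectI conjI ballI impI)
    fix \<alpha> assume \<alpha>: "\<alpha> \<in> arcs n" and compat: "\<forall>\<beta>\<in>T. compatible n \<alpha> \<beta>"
    have "compatible n \<beta> \<alpha>" if "\<beta> \<in> T" for \<beta>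
      using that compat T_arcs compatible_sym[OF \<alpha>, of \<beta>] by auto
    then have "\<forall>x\<in>insert \<alpha> T. \<forall>y\<in>insert \<alpha> T. compatible n x y"
      using T_compat compat compatible_refl[of n \<alpha>] by blast
    then have "insert \<alpha> T \<in> ?C" using T \<alpha> by blast
    then have "T \<le> insert \<alpha> T \<longrightarrow> T = insert \<alpha> T" using max by (rule bspec[rotated])
    then have "T = insert \<alpha> T" by blast
    then show "\<alpha> \<in> T" by auto
  qed (use T_arcs T_compat in simp_all)
  then show ?thesis using T by blast
qed

context
  fixes n :: nat
  assumes n: "0 < n"
begin

lemma start_counts_in_weak_comps: "T \<in> triangulations n \<Longrightarrow> start_counts n T \<in> weak_comps n"
  using sum_start_counts[OF n] unfolding weak_comps_def start_counts_def by auto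

lemma arcs_of_comp_start_counts:
  assumes T: "T \<in> triangulations n"
  shows "arcs_of_comp n (start_counts n T) = T"
proof
  show "T \<subseteq> arcs_of_comp n (start_counts n T)"
    by (rule triangulation_subset_arcs_of_comp[OF n T])
  show "arcs_of_comp n (start_counts n T) \<subseteq> T"
  proof
    fix \<beta> assume \<beta>: "\<beta> \<in> arcs_of_comp n (start_counts n T)"
    show "\<beta> \<in> T"
    proof (rule triangulationsD(3)[OF T])
      show "\<beta> \<in> arcs n" using \<beta> arcs_of_comp_subset by auto
      fix \<gamma> assume "\<gamma> \<in> T"
      then have "\<gamma> \<in> arcs_of_comp n (start_counts n T)"
        using triangulation_subset_arcs_of_comp[OF n T] by auto
      then show "compatible n \<beta> \<gamma>"
        using arcs_of_comp_compatible[OF n start_counts_in_weak_comps[OF T] \<beta>] by simp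
    qed
  qed
qed

lemma bij_betw_start_counts: "bij_betw (start_counts n) (triangulations n) (weak_comps n)"
proof (rule bij_betw_byWitness[where f'="arcs_of_comp n"])
  show "start_counts n ` triangulations n \<subseteq> weak_comps n"
    using start_counts_in_weak_comps by auto
  show "arcs_of_comp n ` weak_comps n \<subseteq> triangulations n"
  proof
    fix T assume "T \<in> arcs_of_comp n ` weak_comps n"
    then obtain a where a: "a \<in> weak_comps n" and T: "T = arcs_of_comp n a" by blast
    \<comment> \<open>extend to a triangulation; its start counts dominate \<open>a\<close> and have the same sum\<close>
    obtain T' where T': "T' \<in> triangulations n" "arcs_of_comp n a \<subseteq> T'"
      using compatible_subset_triangulation[OF arcs_of_comp_subset arcs_of_comp_compatible[OF n a]]
      by blast
    have le: "a i \<le> start_counts n T' i" if "i \<in> {..<n}" for i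
    proof -
      have "a i = start_counts n (arcs_of_comp n a) i"
        using start_counts_arcs_of_comp[OF n a] by simp
      also have "\<dots> \<le> start_counts n T' i"
        unfolding start_counts_def using that T' finite_triangulation[OF T'(1)]
        by (auto intro!: card_mono)
      finally show ?thesis .
    qed
    have eq: "sum a {..<n} = sum (start_counts n T') {..<n}"
      using start_counts_in_weak_comps[OF T'(1)] a unfolding weak_comps_def by simp
    have "a i = start_counts n T' i" if "i < n" for i
      using sum_mono_inv[OF eq le] that by simp
    then have "a = start_counts n T'"
      using a unfolding weak_comps_def start_counts_def by (auto simp: fun_eq_iff)
    then show "T \<in> triangulations n"
      using T T' arcs_of_comp_start_counts by simp
  qed
qed (simp_all add: arcs_of_comp_start_counts start_counts_arcs_of_comp[OF n])

end

section \<open>Rotation\<close>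

lemma bij_betw_if_funpow_id:
  assumes maps: "f ` A \<subseteq> A" and m: "0 < m" and id: "\<And>x. x \<in> A \<Longrightarrow> (f ^^ m) x = x"
  shows "bij_betw f A A"
proof (rule bij_betw_byWitness[where f'="f ^^ (m - 1)"])
  obtain k where k: "m = Suc k" using m by (cases m) auto
  have "(f ^^ (m - 1)) (f x) = (f ^^ m) x" for x
    unfolding k by (simp only: diff_Suc_1 funpow_Suc_right comp_apply)
  moreover have "f ((f ^^ (m - 1)) x) = (f ^^ m) x" for x
    unfolding k by (simp only: diff_Suc_1 funpow.simps(2) comp_apply)
  ultimately show "\<forall>x\<in>A. (f ^^ (m - 1)) (f x) = x" "\<forall>x\<in>A. f ((f ^^ (m - 1)) x) = x"
    using id by auto
  have "(f ^^ l) ` A \<subseteq> A" for l by (induction l) (use maps in auto)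
  then show "(f ^^ (m - 1)) ` A \<subseteq> A" .
qed (fact maps)

lemma rot_arc_in_arcs: "0 < n \<Longrightarrow> \<alpha> \<in> arcs n \<Longrightarrow> rot_arc n \<alpha> \<in> arcs n"
  by (cases \<alpha>) auto

lemma funpow_rot_arc:
  assumes "0 < n" "\<alpha> \<in> arcs n"
  shows "(rot_arc n ^^ j) \<alpha> = (case \<alpha> of Rad i \<Rightarrow> Rad ((i + j * (n - 1)) mod n)
                                      | Bd i k \<Rightarrow> Bd ((i + j * (n - 1)) mod n) k)"
proof (induction j)
  case 0 then show ?case using assms(2) by (cases \<alpha>) auto
next
  case (Suc j)
  have step: "((i + j * (n - 1)) mod n + n - 1) mod n = (i + Suc j * (n - 1)) mod n" for i
  proof -
    have "(i + j * (n - 1)) mod n + n - 1 = (i + j * (n - 1)) mod n + (n - 1)"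
      using assms(1) by simp
    then have "((i + j * (n - 1)) mod n + n - 1) mod n = (i + j * (n - 1) + (n - 1)) mod n"
      by (simp add: mod_add_left_eq)
    also have "i + j * (n - 1) + (n - 1) = i + Suc j * (n - 1)"
      by (simp only: mult_Suc add.commute add.left_commute)
    finally show ?thesis .
  qed
  show ?case using Suc.IH
    by (cases \<alpha>) (simp_all only: funpow.simps(2) comp_apply rot_arc.simps parc.case step)
qed

lemma funpow_rot_arc_period: "0 < n \<Longrightarrow> \<alpha> \<in> arcs n \<Longrightarrow> (rot_arc n ^^ n) \<alpha> = \<alpha>"
  by (cases \<alpha>) (simp_all add: funpow_rot_arc)

lemma bij_betw_rot_arc: "0 < n \<Longrightarrow> bij_betw (rot_arc n) (arcs n) (arcs n)"
  by (rule bij_betw_if_funpow_id) (auto simp: rot_arc_in_arcs funpow_rot_arc_period)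

lemma mem_lifts_rot:
  assumes "i < n"
  shows "x \<in> lifts n ((i + n - 1) mod n) \<longleftrightarrow> x + 1 \<in> lifts n i"
proof -
  have "int (i + n - 1) = (int i - 1) + int n" using assms by simp
  then have "int ((i + n - 1) mod n) = (int i - 1) mod int n"
    by (simp only: zmod_int mod_add_self2)
  then have "x \<in> lifts n ((i + n - 1) mod n) \<longleftrightarrow> x mod int n = (int i - 1) mod int n"
    by (simp add: lifts_def)
  also have "\<dots> \<longleftrightarrow> (x + 1) mod int n = int i mod int n"
    by (simp add: mod_eq_dvd_iff algebra_simps)
  finally show ?thesis using assms by (simp add: lifts_def)
qed

lemma ball_lifts_rot:
  assumes "i < n"
  shows "(\<forall>x\<in>lifts n ((i + n - 1) mod n). P x) \<longleftrightarrow> (\<forall>x\<in>lifts n i. P (x - 1))"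
proof
  assume H: "\<forall>x\<in>lifts n ((i + n - 1) mod n). P x"
  show "\<forall>x\<in>lifts n i. P (x - 1)"
  proof
    fix x assume "x \<in> lifts n i"
    then have "x - 1 \<in> lifts n ((i + n - 1) mod n)"
      using mem_lifts_rot[OF assms, of "x - 1"] by simp
    then show "P (x - 1)" using H by blast
  qed
next
  assume H: "\<forall>x\<in>lifts n i. P (x - 1)"
  show "\<forall>x\<in>lifts n ((i + n - 1) mod n). P x"
  proof
    fix x assume "x \<in> lifts n ((i + n - 1) mod n)"
    then have "P (x + 1 - 1)" using mem_lifts_rot[OF assms] H by blast
    then show "P x" by simp
  qed
qed

lemma compatible_rot:
  assumes n: "0 < n" and "\<alpha> \<in> arcs n" "\<beta> \<in> arcs n"
  shows "compatible n (rot_arc n \<alpha>) (rot_arc n \<beta>) = compatible n \<alpha> \<beta>"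
proof -
  have idx: "(i + n - 1) mod n < n" for i using n by simp
  have RB: "compatible n (Rad ((j + n - 1) mod n)) (Bd ((i + n - 1) mod n) k)
      = compatible n (Rad j) (Bd i k)"
    if "i < n" "j < n" for i j k
    using that by (simp only: compatible_Rad_Bd_iff idx ball_lifts_rot) simp
  have BB: "compatible n (Bd ((i + n - 1) mod n) k) (Bd ((j + n - 1) mod n) l)
      = compatible n (Bd i k) (Bd j l)"
    if "i < n" "j < n" "1 \<le> k" "k \<le> n" "1 \<le> l" "l \<le> n" for i j k l
  proof -
    have "intervals_cross (x - 1) (x - 1 + k') (y - 1) (y - 1 + l')
        = intervals_cross x (x + k') y (y + l')"
      for x y k' l' :: int
      unfolding intervals_cross_def by auto
    with that show ?thesis
      by (simp only: compatible_Bd_Bd_iff idx ball_lifts_rot)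
  qed
  show ?thesis
  proof (cases \<alpha>)
    case (Rad j)
    then show ?thesis using assms RB by (cases \<beta>) simp_all
  next
    case (Bd i k)
    then show ?thesis using assms RB BB by (cases \<beta>) simp_all
  qed
qed

lemma rot_tri_in_triangulations:
  assumes n: "0 < n" and T: "T \<in> triangulations n"
  shows "rot_tri n T \<in> triangulations n"
  unfolding triangulations_def rot_tri_def
proof (intro CollectI conjI ballI impI)
  note TD = triangulationsD[OF T]
  show "rot_arc n ` T \<subseteq> arcs n" using TD(1) rot_arc_in_arcs[OF n] by auto
  show "compatible n \<alpha> \<beta>" if "\<alpha> \<in> rot_arc n ` T" "\<beta> \<in> rot_arc n ` T" for \<alpha> \<beta>
  proof -
    from that obtain \<alpha>' \<beta>' where "\<alpha>' \<in> T" "\<beta>' \<in> T" "\<alpha> = rot_arc n \<alpha>'" "\<beta> = rot_arc n \<beta>'"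
      by blast
    moreover from this have "\<alpha>' \<in> arcs n" "\<beta>' \<in> arcs n" using TD(1) by auto
    ultimately show ?thesis using TD(2) compatible_rot[OF n] by simp
  qed
  fix \<gamma> assume \<gamma>: "\<gamma> \<in> arcs n" and compat: "\<forall>\<beta>\<in>rot_arc n ` T. compatible n \<gamma> \<beta>"
  obtain \<delta> where \<delta>: "\<delta> \<in> arcs n" "\<gamma> = rot_arc n \<delta>"
    using \<gamma> bij_betw_rot_arc[OF n] by (metis bij_betw_imp_surj_on imageE)
  have "\<delta> \<in> T"
  proof (rule TD(3)[OF \<delta>(1)])
    fix \<beta> assume \<beta>: "\<beta> \<in> T"
    with TD(1) have "\<beta> \<in> arcs n" by auto
    moreover have "compatible n (rot_arc n \<delta>) (rot_arc n \<beta>)" using compat \<beta> \<delta> by blast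
    ultimately show "compatible n \<delta> \<beta>" using compatible_rot[OF n \<delta>(1)] by simp
  qed
  then show "\<gamma> \<in> rot_arc n ` T" using \<delta> by auto
qed

lemma funpow_rot_tri: "(rot_tri n ^^ j) T = (rot_arc n ^^ j) ` T"
  by (induction j) (simp_all add: rot_tri_def image_comp)

lemma funpow_rot_tri_period:
  assumes n: "0 < n" and T: "T \<in> triangulations n"
  shows "(rot_tri n ^^ n) T = T"
proof -
  have "(rot_arc n ^^ n) ` T = id ` T"
    using triangulationsD(1)[OF T] funpow_rot_arc_period[OF n] by (intro image_cong) auto
  then show ?thesis by (simp add: funpow_rot_tri)
qed

lemma bij_betw_rot_tri: "0 < n \<Longrightarrow> bij_betw (rot_tri n) (triangulations n) (triangulations n)"
  by (rule bij_betw_if_funpow_id) (auto simp: rot_tri_in_triangulations funpow_rot_tri_period)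

definition rotate_comp :: "nat \<Rightarrow> nat \<Rightarrow> (nat \<Rightarrow> nat) \<Rightarrow> nat \<Rightarrow> nat" where
  "rotate_comp n j a i = (if i < n then a ((i + j) mod n) else 0)"

lemma rot_index_eq_iff:
  fixes s i n :: nat
  assumes "s < n" "i < n"
  shows "(s + n - 1) mod n = i \<longleftrightarrow> s = (i + 1) mod n"
proof (cases s)
  case 0
  with assms show ?thesis by (cases "Suc i = n") auto
next
  case (Suc t)
  then have "(s + n - 1) mod n = t" using assms by simp
  with Suc assms show ?thesis by (cases "Suc i = n") auto
qed

lemma start_rot_arc: "start (rot_arc n \<alpha>) = (start \<alpha> + n - 1) mod n"
  by (cases \<alpha>) simp_all

lemma start_lt: "\<alpha> \<in> arcs n \<Longrightarrow> start \<alpha> < n"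
  by (cases \<alpha>) simp_all

lemma start_counts_rot_tri:
  assumes n: "0 < n" and T: "T \<subseteq> arcs n" and i: "i < n"
  shows "start_counts n (rot_tri n T) i = start_counts n T ((i + 1) mod n)"
proof -
  have "start (rot_arc n \<alpha>) = i \<longleftrightarrow> start \<alpha> = (i + 1) mod n" if "\<alpha> \<in> arcs n" for \<alpha>
    using rot_index_eq_iff[OF start_lt[OF that] i] by (simp add: start_rot_arc)
  then have "{\<alpha> \<in> rot_arc n ` T. start \<alpha> = i} = rot_arc n ` {\<beta> \<in> T. start \<beta> = (i + 1) mod n}"
    using T by blast
  moreover have "inj_on (rot_arc n) {\<beta> \<in> T. start \<beta> = (i + 1) mod n}"
    using bij_betw_rot_arc[OF n] T by (auto intro: inj_on_subset simp: bij_betw_def)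
  ultimately show ?thesis
    using i n unfolding start_counts_def rot_tri_def by (simp add: card_image)
qed

lemma funpow_rot_tri_in_triangulations:
  "0 < n \<Longrightarrow> T \<in> triangulations n \<Longrightarrow> (rot_tri n ^^ j) T \<in> triangulations n"
  by (induction j) (auto intro: rot_tri_in_triangulations)

lemma start_counts_funpow_rot_tri:
  assumes n: "0 < n" and T: "T \<in> triangulations n"
  shows "start_counts n ((rot_tri n ^^ j) T) = rotate_comp n j (start_counts n T)"
proof (induction j)
  case 0
  then show ?case by (auto simp: rotate_comp_def start_counts_def)
next
  case (Suc j)
  have "start_counts n (rot_tri n ((rot_tri n ^^ j) T)) i = rotate_comp n (Suc j) (start_counts n T) i"
    for i
  proof (cases "i < n")
    case True
    have "start_counts n (rot_tri n ((rot_tri n ^^ j) T)) i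
        = start_counts n ((rot_tri n ^^ j) T) ((i + 1) mod n)"
      using start_counts_rot_tri[OF n triangulationsD(1)[OF funpow_rot_tri_in_triangulations[OF n T]]]
        True .
    also have "\<dots> = start_counts n T (((i + 1) mod n + j) mod n)"
      using n by (simp add: Suc.IH rotate_comp_def)
    finally show ?thesis using True by (simp add: rotate_comp_def mod_add_left_eq)
  qed (simp add: start_counts_def rotate_comp_def)
  then show ?case by auto
qed

lemma card_fixpoints_bij_betw:
  assumes "bij_betw h A B" "f ` A \<subseteq> A" "\<And>x. x \<in> A \<Longrightarrow> h (f x) = g (h x)"
  shows "card {x \<in> A. f x = x} = card {y \<in> B. g y = y}"
proof -
  have "h ` {x \<in> A. f x = x} = {y \<in> B. g y = y}"
  proof (intro equalityI subsetI)
    fix y assume "y \<in> h ` {x \<in> A. f x = x}"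
    then obtain x where x: "x \<in> A" "f x = x" "y = h x" by blast
    then show "y \<in> {y \<in> B. g y = y}"
      using assms(3)[OF x(1)] bij_betw_apply[OF assms(1) x(1)] by simp
  next
    fix y assume y: "y \<in> {y \<in> B. g y = y}"
    then obtain x where x: "x \<in> A" "y = h x"
      using assms(1) unfolding bij_betw_def by blast
    have "f x \<in> A" using assms(2) x(1) by blast
    moreover have "h (f x) = h x" using assms(3)[OF x(1)] y x by simp
    ultimately have "f x = x" using assms(1) x(1) unfolding bij_betw_def inj_on_def by blast
    then show "y \<in> h ` {x \<in> A. f x = x}" using x by blast
  qed
  moreover have "inj_on h {x \<in> A. f x = x}"
    using assms(1) unfolding bij_betw_def by (auto intro: inj_on_subset)
  ultimately show ?thesis by (simp add: card_image[symmetric])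
qed

lemma card_fixed_triangulations:
  assumes "0 < n"
  shows "card {T \<in> triangulations n. (rot_tri n ^^ j) T = T}
    = card {a \<in> weak_comps n. rotate_comp n j a = a}"
proof (rule card_fixpoints_bij_betw[where h = "start_counts n"])
  show "bij_betw (start_counts n) (triangulations n) (weak_comps n)"
    using bij_betw_start_counts[OF assms] .
  show "(rot_tri n ^^ j) ` triangulations n \<subseteq> triangulations n"
    using funpow_rot_tri_in_triangulations[OF assms] by blast
  show "start_counts n ((rot_tri n ^^ j) T) = rotate_comp n j (start_counts n T)"
    if "T \<in> triangulations n" for T
    using start_counts_funpow_rot_tri[OF assms that] .
qed

section \<open>Counting the fixed points\<close>

definition shift_invariant :: "nat \<Rightarrow> nat \<Rightarrow> (nat \<Rightarrow> nat) \<Rightarrow> bool" where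
  "shift_invariant n s a \<longleftrightarrow> (\<forall>i<n. a ((i + s) mod n) = a i)"

lemma shift_invariant_mult: "shift_invariant n s a \<Longrightarrow> shift_invariant n (k * s) a"
proof (induction k)
  case 0 then show ?case unfolding shift_invariant_def by simp
next
  case (Suc k)
  show ?case unfolding shift_invariant_def
  proof (intro allI impI)
    fix i assume i: "i < n"
    have n0: "0 < n" using i by simp
    have "(i + Suc k * s) mod n = ((i + k * s) + s) mod n" by (simp add: algebra_simps)
    also have "\<dots> = ((i + k * s) mod n + s) mod n" by (simp add: mod_add_left_eq)
    finally have "(i + Suc k * s) mod n = ((i + k * s) mod n + s) mod n" .
    then have "a ((i + Suc k * s) mod n) = a ((i + k * s) mod n)"
      using Suc.prems n0 unfolding shift_invariant_def by simp
    also have "\<dots> = a i" using Suc.IH Suc.prems i unfolding shift_invariant_def by simp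
    finally show "a ((i + Suc k * s) mod n) = a i" .
  qed
qed

lemma shift_invariant_mod: "shift_invariant n s a \<Longrightarrow> s mod n = s' mod n \<Longrightarrow> shift_invariant n s' a"
  unfolding shift_invariant_def by (metis mod_add_right_eq)

lemma shift_invariant_gcd:
  assumes n: "0 < n" and H: "shift_invariant n j a"
  shows "shift_invariant n (gcd j n) a"
proof (cases "j = 0")
  case True
  then show ?thesis unfolding shift_invariant_def by simp
next
  case False
  obtain x y where xy: "j * x = n * y + gcd j n" using bezout_nat[OF False, of n] by blast
  have "shift_invariant n (x * j) a" by (rule shift_invariant_mult[OF H])
  moreover have "(x * j) mod n = gcd j n mod n" using xy by (simp add: mult.commute)
  ultimately show ?thesis by (rule shift_invariant_mod)
qed

lemma shift_invariant_period:
  assumes H: "shift_invariant n d a" and d: "d dvd n" "0 < d"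
  shows "i < n \<Longrightarrow> a i = a (i mod d)"
proof (induction i rule: less_induct)
  case (less i)
  show ?case
  proof (cases "i < d")
    case True then show ?thesis by simp
  next
    case False
    have "a ((i - d + d) mod n) = a (i - d)"
      using H less.prems unfolding shift_invariant_def by simp
    moreover have "(i - d + d) mod n = i" using False less.prems by simp
    moreover have "a (i - d) = a ((i - d) mod d)"
      using less.IH[of "i - d"] less.prems False d by simp
    moreover have "(i - d) mod d = i mod d" using False le_mod_geq[of d i] by simp
    ultimately show ?thesis by simp
  qed
qed

lemma shift_invariant_gcd_iff:
  assumes "0 < n"
  shows "shift_invariant n (gcd j n) a \<longleftrightarrow> shift_invariant n j a"
proof
  assume "shift_invariant n (gcd j n) a"
  then have "shift_invariant n ((j div gcd j n) * gcd j n) a" by (rule shift_invariant_mult)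
  then show "shift_invariant n j a" by simp
qed (rule shift_invariant_gcd[OF assms])

lemma shift_invariant_iff_periodic:
  assumes d: "d dvd n" "0 < d"
  shows "shift_invariant n d a \<longleftrightarrow> (\<forall>i<n. a i = a (i mod d))"
proof
  assume per: "\<forall>i<n. a i = a (i mod d)"
  show "shift_invariant n d a"
    unfolding shift_invariant_def
  proof (intro allI impI)
    fix i assume i: "i < n"
    then have "a ((i + d) mod n) = a ((i + d) mod n mod d)" using per by simp
    also have "\<dots> = a (i mod d)" using d(1) by (simp add: mod_mod_cancel)
    also have "\<dots> = a i" using per i by simp
    finally show "a ((i + d) mod n) = a i" .
  qed
qed (use shift_invariant_period[OF _ d] in blast)

lemma sum_periodic: "(\<Sum>i<e * d. b (i mod d)) = e * (\<Sum>i<d. b i)" for b :: "nat \<Rightarrow> nat"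
  by (simp add: sum_lessThan_mult_blocks)

lemma card_weak_comps: "card (weak_comps d) = (2 * d - 1) choose d"
proof -
  let ?L = "{l::nat list. length l = d \<and> sum_list l = d}"
  have sum_map: "sum_list (map f [0..<d]) = (\<Sum>i<d. f i)" for f :: "nat \<Rightarrow> nat"
    by (simp add: sum_set_upt_conv_sum_list_nat[symmetric] atLeast0LessThan)
  have "bij_betw (\<lambda>a. map a [0..<d]) (weak_comps d) ?L"
  proof (rule bij_betw_byWitness[where f'="\<lambda>l i. if i < d then l ! i else 0"])
    show "\<forall>a\<in>weak_comps d. (\<lambda>i. if i < d then map a [0..<d] ! i else 0) = a"
      unfolding weak_comps_def by (auto simp: fun_eq_iff)
    show "\<forall>l\<in>?L. map (\<lambda>i. if i < d then l ! i else 0) [0..<d] = l"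
      by (simp add: list_eq_iff_nth_eq)
    show "(\<lambda>a. map a [0..<d]) ` weak_comps d \<subseteq> ?L"
      using sum_map unfolding weak_comps_def by auto
    show "(\<lambda>l i. if i < d then l ! i else 0) ` ?L \<subseteq> weak_comps d"
    proof
      fix a assume "a \<in> (\<lambda>l i. if i < d then l ! i else 0) ` ?L"
      then obtain l where l: "length l = d" "sum_list l = d" "a = (\<lambda>i. if i < d then l ! i else 0)"
        by auto
      then have "(\<Sum>i<d. a i) = sum_list (map (\<lambda>i. l ! i) [0..<d])"
        by (simp add: sum_map)
      also have "\<dots> = d" using l map_nth[of l] by simp
      finally show "a \<in> weak_comps d" using l(3) unfolding weak_comps_def by simp
    qed
  qed
  then have "card (weak_comps d) = card ?L" by (rule bij_betw_same_card)
  also have "\<dots> = (2 * d - 1) choose d" by (simp add: card_length_sum_list mult_2)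
  finally show ?thesis .
qed

lemma card_periodic_weak_comps:
  assumes n: "0 < n" and d: "d dvd n" "0 < d"
  shows "card {a \<in> weak_comps n. \<forall>i<n. a i = a (i mod d)} = card (weak_comps d)"
proof -
  define e where "e = n div d"
  have ne: "n = e * d" and e: "0 < e" and dn: "d \<le> n"
    using n d unfolding e_def by (auto simp: dvd_imp_le)
  let ?P = "{a \<in> weak_comps n. \<forall>i<n. a i = a (i mod d)}"
  define r x where "r a = (\<lambda>i. if i < d then a i else 0)"
    and "x b = (\<lambda>i. if i < n then b (i mod d) else 0)" for a b :: "nat \<Rightarrow> nat"
  have x_r: "x (r a) = a" if "a \<in> ?P" for a
    using that d(2) unfolding x_def r_def weak_comps_def by (auto simp: fun_eq_iff)
  have sum_x: "(\<Sum>i<n. x b i) = e * (\<Sum>i<d. b i)" for b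
    unfolding x_def ne by (simp add: sum_periodic)
  have "bij_betw r ?P (weak_comps d)"
  proof (rule bij_betw_byWitness[where f'=x])
    show "\<forall>a\<in>?P. x (r a) = a" using x_r by blast
    show "\<forall>b\<in>weak_comps d. r (x b) = b"
      using dn unfolding x_def r_def weak_comps_def by (auto simp: fun_eq_iff)
    show "r ` ?P \<subseteq> weak_comps d"
    proof
      fix b assume "b \<in> r ` ?P"
      then obtain a where a: "a \<in> ?P" "b = r a" by blast
      have "(\<Sum>i<n. x b i) = e * (\<Sum>i<d. b i)" by (rule sum_x)
      then have "(\<Sum>i<n. a i) = e * (\<Sum>i<d. b i)" using x_r[OF a(1)] a(2) by simp
      moreover have "(\<Sum>i<n. a i) = n" using a(1) unfolding weak_comps_def by blast
      ultimately have "e * (\<Sum>i<d. b i) = e * d" using ne by simp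
      then show "b \<in> weak_comps d" using e a(2) unfolding weak_comps_def r_def by simp
    qed
    have "i mod d < n" for i using d(2) dn by (meson less_le_trans mod_less_divisor)
    then show "x ` weak_comps d \<subseteq> ?P"
      using sum_x ne unfolding weak_comps_def x_def by auto
  qed
  then show ?thesis by (rule bij_betw_same_card)
qed

lemma primitive_root_dvd:
  assumes z: "primitive_root n z" and n: "0 < n" and m: "z ^ m = 1"
  shows "n dvd m"
proof -
  have zn: "z ^ n = 1" and zp: "\<And>k. 0 < k \<Longrightarrow> k < n \<Longrightarrow> z ^ k \<noteq> 1"
    using z unfolding primitive_root_def by auto
  have "z ^ m = z ^ (n * (m div n) + m mod n)" by simp
  also have "\<dots> = (z ^ n) ^ (m div n) * z ^ (m mod n)" by (simp only: power_add power_mult)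
  finally have "z ^ m = (z ^ n) ^ (m div n) * z ^ (m mod n)" .
  then have "z ^ (m mod n) = 1" using zn m by simp
  then have "m mod n = 0" using zp[of "m mod n"] n by (cases "m mod n = 0") auto
  then show ?thesis by (simp add: mod_eq_0_iff_dvd)
qed

lemma primitive_root_power:
  assumes z: "primitive_root n z" and n: "0 < n"
  shows "primitive_root (n div gcd j n) (z ^ j)"
  unfolding primitive_root_def
proof (intro conjI allI impI)
  define d e where "d = gcd j n" and "e = n div d"
  have ddvd: "d dvd n" "d dvd j" unfolding d_def by simp_all
  have ne: "n = d * e" using ddvd unfolding e_def by simp
  have zn: "z ^ n = 1" using z unfolding primitive_root_def by auto
  have "j * e = (j div d) * n" using ddvd ne by (metis dvd_div_mult_self mult.assoc mult.commute)
  then show "(z ^ j) ^ (n div gcd j n) = 1"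
    unfolding d_def[symmetric] e_def[symmetric] power_mult[symmetric]
    by (simp add: power_mult mult.commute[of "j div d"] zn)
  fix k assume k: "0 < k \<and> k < n div gcd j n"
  show "(z ^ j) ^ k \<noteq> 1"
  proof
    assume "(z ^ j) ^ k = 1"
    then have "n dvd j * k" using primitive_root_dvd[OF z n] by (simp add: power_mult)
    moreover have "j * k = d * ((j div d) * k)" using ddvd(2) by (simp add: mult.assoc)
    ultimately have "d * e dvd d * ((j div d) * k)" using ne by simp
    then have "e dvd (j div d) * k" using n unfolding d_def by simp
    moreover have "coprime e (j div d)"
      using div_gcd_coprime[of j n] n unfolding e_def d_def by (simp add: coprime_commute)
    ultimately have "e dvd k" by (simp add: coprime_dvd_mult_right_iff)
    then have "e \<le> k" using k by (simp add: dvd_imp_le)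
    then show False using k unfolding e_def d_def by simp
  qed
qed

lemma card_rotate_comp_fixed:
  assumes n: "0 < n"
  shows "card {a \<in> weak_comps n. rotate_comp n j a = a} = (2 * gcd j n - 1) choose gcd j n"
proof -
  have "rotate_comp n j a = a \<longleftrightarrow> (\<forall>i<n. a i = a (i mod gcd j n))" if "a \<in> weak_comps n" for a
  proof -
    have "rotate_comp n j a = a \<longleftrightarrow> shift_invariant n j a"
      using that
        unfolding weak_comps_def shift_invariant_def rotate_comp_def by (auto simp: fun_eq_iff)
    also have "\<dots> \<longleftrightarrow> shift_invariant n (gcd j n) a"
      using shift_invariant_gcd_iff[OF n] by simp
    also have "\<dots> \<longleftrightarrow> (\<forall>i<n. a i = a (i mod gcd j n))"
      using n by (intro shift_invariant_iff_periodic) auto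
    finally show ?thesis .
  qed
  then have "{a \<in> weak_comps n. rotate_comp n j a = a}
      = {a \<in> weak_comps n. \<forall>i<n. a i = a (i mod gcd j n)}"
    by blast
  then show ?thesis using card_periodic_weak_comps[OF n] card_weak_comps n by simp
qed

lemma finite_triangulations: "finite (triangulations n)"
  by (rule finite_subset[of _ "Pow (arcs n)"]) (auto simp: triangulations_def finite_arcs)

theorem proposition3p9:
  fixes n :: nat
  assumes "n \<ge> 1"
  shows "cyclic_sieving (triangulations n) (rot_tri n) n (t_poly n)"
proof -
  have n: "0 < n" using assms by simp
  have "poly (map_poly of_int (t_poly n)) (z ^ j)
      = of_nat (card {T \<in> triangulations n. (rot_tri n ^^ j) T = T})"
    if z: "primitive_root n z" for z j
  proof -
    define d e where "d = gcd j n" and "e = n div gcd j n"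
    have d: "0 < d" and n_eq: "n = d * e" using n unfolding d_def e_def by simp_all
    then have "0 < e" using n by simp
    then interpret prim_root e "z ^ j"
      using primitive_root_power[OF z n] unfolding e_def by unfold_locales
    have "poly (map_poly of_int (t_poly n)) (z ^ j) = ipoly (t_poly (d * e)) (z ^ j)"
      unfolding ipoly_def n_eq ..
    also have "\<dots> = of_nat ((2 * d - 1) choose d)"
      by (rule ipoly_t_poly[OF d])
    also have "\<dots> = of_nat (card {T \<in> triangulations n. (rot_tri n ^^ j) T = T})"
      using card_fixed_triangulations[OF n] card_rotate_comp_fixed[OF n] unfolding d_def by simp
    finally show ?thesis .
  qed
  then show ?thesis
    unfolding cyclic_sieving_def
    using finite_triangulations bij_betw_rot_tri[OF n] funpow_rot_tri_period[OF n] by blast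
qed

end
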